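(* In CC, if $\Gamma\vdash M:A$, then $\mathrm{FV}(M)\vdash M:A$.
   Context: CC: expressions $x\mid U_i\mid\Pi x{:}A.B\mid L\,M\mid\lambda x{:}A.M$; contexts $\Gamma::=\cdot\mid\Gamma,x{:}A$; reduction $(\lambda x{:}A.N)\,M\triangleright N[M/x]$; equivalence $\equiv$ is joinability under $\triangleright^*$ plus $\eta$ (if $L\triangleright^*\lambda x{:}A.L'$, $M\triangleright^*M'$, $L'\equiv M'\,x$ then $L\equiv M$, and symmetrically). Typing and context formation (mutual): $\vdash\cdot$; $\vdash\Gamma,\Gamma\vdash A:U_i\Rightarrow\vdash\Gamma,x{:}A$; variables from a well-formed context; $U_i:U_{i+1}$; $\Pi x{:}A.B:U_{\max(i,j)}$ if $A:U_i$ and $B:U_j$ under $x{:}A$; $M\,N:B[N/x]$ if $M:\Pi x{:}A.B$, $N:A$; $\lambda x{:}A.M:\Pi x{:}A.B$ if $M:B$ under $x{:}A$; conversion to a type $B:U_i$ with $A\equiv B$. $\mathrm{FV}(M)$ takes the derivation of $\Gamma\vdash M:A$ as implicit argument: let $x_1,\dots,x_n$ be the unbound (free) variables of $M$ and of $A$, with $\Gamma\vdash x_k:A_k$; then $\mathrm{FV}(M)=\mathrm{FV}(A_1)\cup\dots\cup\mathrm{FV}(A_n)\cup(x_1{:}A_1,\dots,x_n{:}A_n)$, where the union $\Gamma_1\cup\Gamma_2$ of contexts is $\Gamma_1$ appended with the entries $x{:}A$ that appear only in $\Gamma_2$, preserving their order. *)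

theory Defs
  imports Main
begin

text \<open>Calculus of Constructions with a universe hierarchy, in locally nameless style:
  bound variables are de Bruijn indices, free variables are names (so alpha-equivalent
  terms are syntactically equal), contexts are lists of named declarations.\<close>

type_synonym name = nat

datatype trm =
    BVar nat
  | FVar name
  | Univ nat
  | Pi trm trm        (* Pi x:A. B, body B binds index 0 *)
  | App trm trm
  | Lam trm trm       (* lambda x:A. M, body M binds index 0 *)

primrec open_rec :: "nat \<Rightarrow> trm \<Rightarrow> trm \<Rightarrow> trm" where
  "open_rec k u (BVar i) = (if i = k then u else BVar i)"
| "open_rec k u (FVar x) = FVar x"
| "open_rec k u (Univ i) = Univ i"
| "open_rec k u (Pi A B) = Pi (open_rec k u A) (open_rec (Suc k) u B)"
| "open_rec k u (App L M) = App (open_rec k u L) (open_rec k u M)"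
| "open_rec k u (Lam A M) = Lam (open_rec k u A) (open_rec (Suc k) u M)"

text \<open>\<open>opn N M\<close> is N[M/x] where x is the variable bound by the enclosing binder.\<close>
definition opn :: "trm \<Rightarrow> trm \<Rightarrow> trm" where
  "opn t u = open_rec 0 u t"

primrec fv :: "trm \<Rightarrow> name set" where
  "fv (BVar i) = {}"
| "fv (FVar x) = {x}"
| "fv (Univ i) = {}"
| "fv (Pi A B) = fv A \<union> fv B"
| "fv (App L M) = fv L \<union> fv M"
| "fv (Lam A M) = fv A \<union> fv M"

inductive red :: "trm \<Rightarrow> trm \<Rightarrow> bool" where
  beta: "red (App (Lam A N) M) (opn N M)"
| app1: "red L L' \<Longrightarrow> red (App L M) (App L' M)"
| app2: "red M M' \<Longrightarrow> red (App L M) (App L M')"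
| pi1: "red A A' \<Longrightarrow> red (Pi A B) (Pi A' B)"
| pi2: "finite S \<Longrightarrow> (\<And>x. x \<notin> S \<Longrightarrow> red (opn B (FVar x)) (opn B' (FVar x)))
        \<Longrightarrow> red (Pi A B) (Pi A B')"
| lam1: "red A A' \<Longrightarrow> red (Lam A M) (Lam A' M)"
| lam2: "finite S \<Longrightarrow> (\<And>x. x \<notin> S \<Longrightarrow> red (opn M (FVar x)) (opn M' (FVar x)))
        \<Longrightarrow> red (Lam A M) (Lam A M')"

abbreviation reds :: "trm \<Rightarrow> trm \<Rightarrow> bool" where
  "reds \<equiv> red\<^sup>*\<^sup>*"

inductive equiv :: "trm \<Rightarrow> trm \<Rightarrow> bool" where
  join: "reds L N \<Longrightarrow> reds M N \<Longrightarrow> equiv L M"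
| eta1: "reds L (Lam A L') \<Longrightarrow> reds M M' \<Longrightarrow> finite S \<Longrightarrow>
         (\<And>x. x \<notin> S \<Longrightarrow> equiv (opn L' (FVar x)) (App M' (FVar x))) \<Longrightarrow> equiv L M"
| eta2: "reds L L' \<Longrightarrow> reds M (Lam A M') \<Longrightarrow> finite S \<Longrightarrow>
         (\<And>x. x \<notin> S \<Longrightarrow> equiv (App L' (FVar x)) (opn M' (FVar x))) \<Longrightarrow> equiv L M"

text \<open>Contexts: the list \<open>\<Gamma> @ [(x, A)]\<close> is \<open>\<Gamma>, x:A\<close>.\<close>
type_synonym ctx = "(name \<times> trm) list"

definition cdom :: "ctx \<Rightarrow> name set" where
  "cdom \<Gamma> = fst ` set \<Gamma>"

inductive wf_ctx :: "ctx \<Rightarrow> bool"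
  and typing :: "ctx \<Rightarrow> trm \<Rightarrow> trm \<Rightarrow> bool" where
  wf_nil: "wf_ctx []"
| wf_cons: "wf_ctx \<Gamma> \<Longrightarrow> typing \<Gamma> A (Univ i) \<Longrightarrow> x \<notin> cdom \<Gamma> \<Longrightarrow> wf_ctx (\<Gamma> @ [(x, A)])"
| t_var: "wf_ctx \<Gamma> \<Longrightarrow> (x, A) \<in> set \<Gamma> \<Longrightarrow> typing \<Gamma> (FVar x) A"
| t_univ: "wf_ctx \<Gamma> \<Longrightarrow> typing \<Gamma> (Univ i) (Univ (Suc i))"
| t_pi: "typing \<Gamma> A (Univ i) \<Longrightarrow> finite S \<Longrightarrow>
         (\<And>x. x \<notin> S \<Longrightarrow> typing (\<Gamma> @ [(x, A)]) (opn B (FVar x)) (Univ j)) \<Longrightarrow>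
         typing \<Gamma> (Pi A B) (Univ (max i j))"
| t_app: "typing \<Gamma> M (Pi A B) \<Longrightarrow> typing \<Gamma> N A \<Longrightarrow> typing \<Gamma> (App M N) (opn B N)"
| t_lam: "finite S \<Longrightarrow>
         (\<And>x. x \<notin> S \<Longrightarrow> typing (\<Gamma> @ [(x, A)]) (opn M (FVar x)) (opn B (FVar x))) \<Longrightarrow>
         typing \<Gamma> (Lam A M) (Pi A B)"
| t_conv: "typing \<Gamma> M A \<Longrightarrow> typing \<Gamma> B (Univ i) \<Longrightarrow> equiv A B \<Longrightarrow> typing \<Gamma> M B"

definition cunion :: "ctx \<Rightarrow> ctx \<Rightarrow> ctx" where
  "cunion \<Gamma>1 \<Gamma>2 = \<Gamma>1 @ filter (\<lambda>e. e \<notin> set \<Gamma>1) \<Gamma>2"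

text \<open>\<open>fvc_aux n \<Gamma> S\<close>: the free-variable context generated by the variables \<open>S\<close> in \<open>\<Gamma>\<close>,
  i.e. \<open>FV(A_1) \<union> ... \<union> FV(A_n) \<union> (x_1:A_1,...,x_n:A_n)\<close> where \<open>x_1,...,x_n\<close> are the
  declared variables of \<open>\<Gamma>\<close> lying in \<open>S\<close>, listed in their order in \<open>\<Gamma>\<close>.
  The type \<open>A_k\<close> of \<open>x_k\<close> is typed (by a universe, which has no free variables) in the
  prefix of \<open>\<Gamma>\<close> preceding \<open>x_k\<close>, so the recursion is on that prefix.
  \<open>n\<close> is fuel; \<open>n = length \<Gamma>\<close> suffices.\<close>
primrec fvc_aux :: "nat \<Rightarrow> ctx \<Rightarrow> name set \<Rightarrow> ctx" where
  "fvc_aux 0 \<Gamma> S = []"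
| "fvc_aux (Suc n) \<Gamma> S =
     (let idx = filter (\<lambda>i. fst (\<Gamma> ! i) \<in> S) [0..<length \<Gamma>]
      in cunion (foldl cunion [] (map (\<lambda>i. fvc_aux n (take i \<Gamma>) (fv (snd (\<Gamma> ! i)))) idx))
                (map (\<lambda>i. \<Gamma> ! i) idx))"

definition fvc :: "ctx \<Rightarrow> name set \<Rightarrow> ctx" where
  "fvc \<Gamma> S = fvc_aux (length \<Gamma>) \<Gamma> S"

text \<open>\<open>FV(M)\<close> for a derivation of \<open>\<Gamma> \<turnstile> M : A\<close>: generated by the free variables of M and A.\<close>
definition FV :: "ctx \<Rightarrow> trm \<Rightarrow> trm \<Rightarrow> ctx" where
  "FV \<Gamma> M A = fvc \<Gamma> (fv M \<union> fv A)"

end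

theory Submission
  imports Defs "HOL-Library.Confluence"
begin

text \<open>
  The core of the argument is strengthening: if \<open>\<Delta>\<close> is a well-formed sub-list of \<open>\<Gamma>\<close> that
  declares the free variables of \<open>M\<close>, then \<open>\<Gamma> \<turnstile> M : A\<close> gives \<open>\<Delta> \<turnstile> M : A'\<close> for some reduct
  \<open>A'\<close> of \<open>A\<close>; if \<open>\<Delta>\<close> also declares the free variables of \<open>A\<close>, then \<open>A\<close> is a type in \<open>\<Delta>\<close> and
  conversion gives back \<open>\<Delta> \<turnstile> M : A\<close>. The induction needs conversion to be transitive and
  injective on \<open>\<Pi>\<close>, so it is carried out for conversion as joinability, which is transitive by
  Church-Rosser (via parallel reduction); this changes nothing, because the eta clauses of the
  equivalence never relate types: by subject reduction no type reduces to a \<open>\<lambda>\<close>.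

  \<open>FV(M)\<close> is such a \<open>\<Delta>\<close>: its entries are entries of \<open>\<Gamma>\<close>, and with every variable it contains the
  free variables of the variable's type, declared before it, so it is well formed.
\<close>

section \<open>Locally nameless infrastructure\<close>

primrec lc_at :: "nat \<Rightarrow> trm \<Rightarrow> bool" where
  "lc_at k (BVar i) = (i < k)"
| "lc_at k (FVar x) = True"
| "lc_at k (Univ i) = True"
| "lc_at k (Pi A B) = (lc_at k A \<and> lc_at (Suc k) B)"
| "lc_at k (App L M) = (lc_at k L \<and> lc_at k M)"
| "lc_at k (Lam A M) = (lc_at k A \<and> lc_at (Suc k) M)"

abbreviation lc :: "trm \<Rightarrow> bool" where
  "lc t \<equiv> lc_at 0 t"

primrec subst :: "name \<Rightarrow> trm \<Rightarrow> trm \<Rightarrow> trm" where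
  "subst x u (BVar i) = BVar i"
| "subst x u (FVar y) = (if y = x then u else FVar y)"
| "subst x u (Univ i) = Univ i"
| "subst x u (Pi A B) = Pi (subst x u A) (subst x u B)"
| "subst x u (App L M) = App (subst x u L) (subst x u M)"
| "subst x u (Lam A M) = Lam (subst x u A) (subst x u M)"

primrec close_rec :: "nat \<Rightarrow> name \<Rightarrow> trm \<Rightarrow> trm" where
  "close_rec k x (BVar i) = BVar i"
| "close_rec k x (FVar y) = (if y = x then BVar k else FVar y)"
| "close_rec k x (Univ i) = Univ i"
| "close_rec k x (Pi A B) = Pi (close_rec k x A) (close_rec (Suc k) x B)"
| "close_rec k x (App L M) = App (close_rec k x L) (close_rec k x M)"
| "close_rec k x (Lam A M) = Lam (close_rec k x A) (close_rec (Suc k) x M)"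

definition cls :: "name \<Rightarrow> trm \<Rightarrow> trm" where
  "cls x t = close_rec 0 x t"

lemma finite_fv [simp]: "finite (fv t)"
  by (induction t) auto

lemma obtain_fresh:
  assumes "finite S"
  obtains x :: name where "x \<notin> S"
  using assms ex_new_if_finite infinite_UNIV_nat by blast

lemma lc_at_mono: "lc_at k t \<Longrightarrow> k \<le> j \<Longrightarrow> lc_at j t"
  by (induction t arbitrary: k j) force+

lemma open_rec_lc: "lc_at k t \<Longrightarrow> k \<le> j \<Longrightarrow> open_rec j u t = t"
  by (induction t arbitrary: k j) force+

lemma opn_Univ [simp]: "opn (Univ j) u = Univ j"
  by (simp add: opn_def)

lemma lc_opn: "lc_at (Suc 0) t \<Longrightarrow> lc u \<Longrightarrow> lc (opn t u)"
proof -
  have "lc_at (Suc k) t \<Longrightarrow> lc u \<Longrightarrow> lc_at k (open_rec k u t)" for k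
    by (induction t arbitrary: k) (auto intro: lc_at_mono)
  then show "lc_at (Suc 0) t \<Longrightarrow> lc u \<Longrightarrow> lc (opn t u)"
    by (simp add: opn_def)
qed

lemma lc_opn_body: "lc (opn t u) \<Longrightarrow> lc_at (Suc 0) t"
proof -
  have "lc_at k (open_rec k u t) \<Longrightarrow> lc_at (Suc k) t" for k
    by (induction t arbitrary: k) (auto split: if_splits)
  then show "lc (opn t u) \<Longrightarrow> lc_at (Suc 0) t"
    by (simp add: opn_def)
qed

lemma fv_opn_subset: "fv (opn t u) \<subseteq> fv t \<union> fv u"
proof -
  have "fv (open_rec k u t) \<subseteq> fv t \<union> fv u" for k
    by (induction t arbitrary: k) auto
  then show ?thesis
    by (simp add: opn_def)
qed

lemma fv_subset_opn: "fv t \<subseteq> fv (opn t u)"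
proof -
  have "fv t \<subseteq> fv (open_rec k u t)" for k
    by (induction t arbitrary: k) auto
  then show ?thesis
    by (simp add: opn_def)
qed

lemma subst_fresh: "x \<notin> fv t \<Longrightarrow> subst x u t = t"
  by (induction t) auto

lemma subst_rename_back: "y \<notin> fv t \<Longrightarrow> subst y (FVar x) (subst x (FVar y) t) = t"
  by (induction t) auto

lemma subst_opn: "lc u \<Longrightarrow> subst x u (opn t v) = opn (subst x u t) (subst x u v)"
proof -
  assume "lc u"
  then have "subst x u (open_rec k v t) = open_rec k (subst x u v) (subst x u t)" for k
    by (induction t arbitrary: k) (auto simp: open_rec_lc)
  then show ?thesis
    by (simp add: opn_def)
qed

lemma subst_opn_FVar: "lc u \<Longrightarrow> y \<noteq> x \<Longrightarrow> subst x u (opn t (FVar y)) = opn (subst x u t) (FVar y)"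
  by (simp add: subst_opn)

lemma opn_eq_subst: "x \<notin> fv t \<Longrightarrow> opn t u = subst x u (opn t (FVar x))"
proof -
  assume "x \<notin> fv t"
  then have "open_rec k u t = subst x u (open_rec k (FVar x) t)" for k
    by (induction t arbitrary: k) auto
  then show ?thesis
    by (simp add: opn_def)
qed

lemma subst_opn_rename: "x \<notin> fv t \<Longrightarrow> subst x (FVar y) (opn t (FVar x)) = opn t (FVar y)"
  by (rule opn_eq_subst[symmetric])

lemma opn_cls: "lc t \<Longrightarrow> opn (cls x t) (FVar x) = t"
proof -
  have "lc_at k t \<Longrightarrow> open_rec k (FVar x) (close_rec k x t) = t" for k
    by (induction t arbitrary: k) auto
  then show "lc t \<Longrightarrow> opn (cls x t) (FVar x) = t"
    by (simp add: opn_def cls_def)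
qed

lemma cls_opn: "x \<notin> fv t \<Longrightarrow> cls x (opn t (FVar x)) = t"
proof -
  have "x \<notin> fv t \<Longrightarrow> close_rec k x (open_rec k (FVar x) t) = t" for k
    by (induction t arbitrary: k) auto
  then show "x \<notin> fv t \<Longrightarrow> cls x (opn t (FVar x)) = t"
    by (simp add: opn_def cls_def)
qed

lemma fv_cls: "x \<notin> fv (cls x t)"
proof -
  have "x \<notin> fv (close_rec k x t)" for k
    by (induction t arbitrary: k) auto
  then show ?thesis
    by (simp add: cls_def)
qed

lemma size_opn_FVar: "size (opn t (FVar x)) = size t"
proof -
  have "size (open_rec k (FVar x) t) = size t" for k
    by (induction t arbitrary: k) auto
  then show ?thesis
    by (simp add: opn_def)
qed

lemma cofinite_opn:
  assumes S: "finite S"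
    and body: "\<And>x. x \<notin> S \<Longrightarrow> R (opn B (FVar x)) (opn B' (FVar x))"
    and stable: "\<And>x s t. R s t \<Longrightarrow> R (subst x N s) (subst x N t)"
  shows "R (opn B N) (opn B' N)"
proof -
  obtain x where x: "x \<notin> S \<union> fv B \<union> fv B'"
    using obtain_fresh[of "S \<union> fv B \<union> fv B'"] S by auto
  then have "R (opn B (FVar x)) (opn B' (FVar x))"
    using body by blast
  then have "R (subst x N (opn B (FVar x))) (subst x N (opn B' (FVar x)))"
    by (rule stable)
  then show ?thesis
    using x by (simp add: opn_eq_subst[symmetric])
qed

section \<open>Reduction\<close>

inductive_cases red_UnivE [elim!]: "red (Univ i) t"
inductive_cases red_FVarE [elim!]: "red (FVar x) t"
inductive_cases red_PiE: "red (Pi A B) t"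
inductive_cases red_LamE: "red (Lam A B) t"
inductive_cases red_AppE: "red (App M N) t"

lemma reds_Univ: "reds (Univ i) t \<Longrightarrow> t = Univ i"
  by (induction rule: rtranclp_induct) auto

lemma red_lc: "red t t' \<Longrightarrow> lc t \<Longrightarrow> lc t'"
proof (induction rule: red.induct)
  case (beta A N M)
  then show ?case by (simp add: lc_opn)
next
  case (pi2 S B B' A)
  obtain x where "x \<notin> S" using obtain_fresh pi2.hyps(1) .
  then have "lc (opn B' (FVar x))" using pi2 by (simp add: lc_opn)
  then show ?case using pi2 lc_opn_body by auto
next
  case (lam2 S M M' A)
  obtain x where "x \<notin> S" using obtain_fresh lam2.hyps(1) .
  then have "lc (opn M' (FVar x))" using lam2 by (simp add: lc_opn)
  then show ?case using lam2 lc_opn_body by auto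
qed auto

lemma reds_lc: "reds t t' \<Longrightarrow> lc t \<Longrightarrow> lc t'"
  by (induction rule: rtranclp_induct) (auto intro: red_lc)

lemma red_subst: "red t t' \<Longrightarrow> lc u \<Longrightarrow> red (subst x u t) (subst x u t')"
proof (induction rule: red.induct)
  case (beta A N M)
  then show ?case
    using red.beta[of "subst x u A" "subst x u N" "subst x u M"] by (simp add: subst_opn)
next
  case (pi2 S B B' A)
  then have "red (opn (subst x u B) (FVar y)) (opn (subst x u B') (FVar y))" if "y \<notin> insert x S" for y
    using that by (metis insertCI subst_opn_FVar)
  then show ?case
    using pi2.hyps(1) by (auto intro: red.pi2[of "insert x S"])
next
  case (lam2 S M M' A)
  then have "red (opn (subst x u M) (FVar y)) (opn (subst x u M') (FVar y))" if "y \<notin> insert x S" for y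
    using that by (metis insertCI subst_opn_FVar)
  then show ?case
    using lam2.hyps(1) by (auto intro: red.lam2[of "insert x S"])
qed (auto intro: red.intros)

lemma reds_subst: "reds t t' \<Longrightarrow> lc u \<Longrightarrow> reds (subst x u t) (subst x u t')"
  by (induction rule: rtranclp_induct) (auto intro: red_subst rtranclp.rtrancl_into_rtrancl)

lemma reds_cong: "reds a b \<Longrightarrow> (\<And>x y. red x y \<Longrightarrow> red (f x) (f y)) \<Longrightarrow> reds (f a) (f b)"
  by (induction rule: rtranclp_induct) (auto intro: rtranclp.rtrancl_into_rtrancl)

lemma reds_App: "reds L L' \<Longrightarrow> reds M M' \<Longrightarrow> reds (App L M) (App L' M')"
proof -
  assume "reds L L'" "reds M M'"
  then have "reds (App L M) (App L' M)" "reds (App L' M) (App L' M')"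
    by (auto intro: reds_cong[where f="\<lambda>L. App L M"] reds_cong[where f="App L'"] red.app1 red.app2)
  then show ?thesis by (rule rtranclp_trans)
qed

lemma reds_Pi_dom: "reds A A' \<Longrightarrow> reds (Pi A B) (Pi A' B)"
  by (erule reds_cong) (rule red.pi1)

lemma reds_Lam_dom: "reds A A' \<Longrightarrow> reds (Lam A B) (Lam A' B)"
  by (erule reds_cong) (rule red.lam1)

text \<open>After each step the body is closed over \<open>x\<close> again, so that every intermediate body
  is of the form \<open>opn _ (FVar x)\<close> and the cofinite rule for the binder applies.\<close>

lemma reds_binder_fresh:
  assumes binder_red: "\<And>B B' S. finite S \<Longrightarrow> (\<And>x. x \<notin> S \<Longrightarrow> red (opn B (FVar x)) (opn B' (FVar x)))
      \<Longrightarrow> red (f B) (f B')"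
    and body: "reds (opn B (FVar x)) t" and x: "x \<notin> fv B" and lcB: "lc_at (Suc 0) B"
  shows "reds (f B) (f (cls x t))"
  using body
proof (induction rule: rtranclp_induct)
  case base
  show ?case using x by (simp add: cls_opn)
next
  case (step t t')
  have "lc t" using step.hyps(1) lcB reds_lc lc_opn by fastforce
  with step.hyps(2) have "red (opn (cls x t) (FVar x)) (opn (cls x t') (FVar x))"
    by (simp add: opn_cls red_lc)
  then have "red (opn (cls x t) (FVar y)) (opn (cls x t') (FVar y))" for y
    using red_subst[of "opn (cls x t) (FVar x)" "opn (cls x t') (FVar x)" "FVar y" x]
    by (simp add: subst_opn_rename fv_cls)
  then have "red (f (cls x t)) (f (cls x t'))"
    by (intro binder_red[of "{}"]) auto
  with step.IH show ?case by (rule rtranclp.rtrancl_into_rtrancl)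
qed

lemma reds_binder:
  assumes binder_red: "\<And>B B' S. finite S \<Longrightarrow> (\<And>x. x \<notin> S \<Longrightarrow> red (opn B (FVar x)) (opn B' (FVar x)))
      \<Longrightarrow> red (f B) (f B')"
    and S: "finite S" and body: "\<And>x. x \<notin> S \<Longrightarrow> reds (opn B (FVar x)) (opn B' (FVar x))"
    and lcB: "lc_at (Suc 0) B"
  shows "reds (f B) (f B')"
proof -
  obtain x where x: "x \<notin> S \<union> fv B \<union> fv B'"
    using obtain_fresh[of "S \<union> fv B \<union> fv B'"] S by auto
  then have "reds (f B) (f (cls x (opn B' (FVar x))))"
    using body lcB by (intro reds_binder_fresh[OF binder_red]) auto
  with x show ?thesis by (simp add: cls_opn)
qed

lemma reds_Pi_inv:
  "reds (Pi A B) T \<Longrightarrow> \<exists>A' B' S. T = Pi A' B' \<and> reds A A' \<and> finite S \<and>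
     (\<forall>x. x \<notin> S \<longrightarrow> reds (opn B (FVar x)) (opn B' (FVar x)))"
proof (induction rule: rtranclp_induct)
  case (step T T')
  then obtain A1 B1 S1 where 1: "T = Pi A1 B1" "reds A A1" "finite S1"
     "\<forall>x. x \<notin> S1 \<longrightarrow> reds (opn B (FVar x)) (opn B1 (FVar x))" by blast
  from step.hyps(2)[unfolded 1(1)] show ?case
  proof (rule red_PiE)
    fix A2 assume "T' = Pi A2 B1" "red A1 A2"
    then show ?thesis using 1
      by (intro exI[of _ A2] exI[of _ B1] exI[of _ S1]) (auto intro: rtranclp.rtrancl_into_rtrancl)
  next
    fix S2 B2 assume "T' = Pi A1 B2" "finite S2"
      "\<And>x. x \<notin> S2 \<Longrightarrow> red (opn B1 (FVar x)) (opn B2 (FVar x))"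
    then show ?thesis using 1
      by (intro exI[of _ A1] exI[of _ B2] exI[of _ "S1 \<union> S2"]) (auto intro: rtranclp.rtrancl_into_rtrancl)
  qed
qed blast

lemma reds_opn_body:
  assumes "finite S" "\<forall>x. x \<notin> S \<longrightarrow> reds (opn B (FVar x)) (opn B' (FVar x))" and "lc N"
  shows "reds (opn B N) (opn B' N)"
proof (rule cofinite_opn[where R=reds, OF assms(1)])
  show "reds (subst y N s) (subst y N t)" if "reds s t" for y s t
    using that reds_subst \<open>lc N\<close> by blast
qed (use assms(2) in blast)

section \<open>Parallel reduction and confluence\<close>

inductive par :: "trm \<Rightarrow> trm \<Rightarrow> bool" where
  p_bvar: "par (BVar i) (BVar i)"
| p_fvar: "par (FVar x) (FVar x)"
| p_univ: "par (Univ i) (Univ i)"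
| p_pi: "par A A' \<Longrightarrow> finite S \<Longrightarrow> (\<And>x. x \<notin> S \<Longrightarrow> par (opn B (FVar x)) (opn B' (FVar x)))
         \<Longrightarrow> par (Pi A B) (Pi A' B')"
| p_lam: "par A A' \<Longrightarrow> finite S \<Longrightarrow> (\<And>x. x \<notin> S \<Longrightarrow> par (opn B (FVar x)) (opn B' (FVar x)))
         \<Longrightarrow> par (Lam A B) (Lam A' B')"
| p_app: "par M M' \<Longrightarrow> par N N' \<Longrightarrow> par (App M N) (App M' N')"
| p_beta: "finite S \<Longrightarrow> (\<And>x. x \<notin> S \<Longrightarrow> par (opn D (FVar x)) (opn D' (FVar x))) \<Longrightarrow> par N N'
         \<Longrightarrow> par (App (Lam A D) N) (opn D' N')"

inductive_cases par_PiE: "par (Pi A B) t"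
inductive_cases par_LamE: "par (Lam A B) t"
inductive_cases par_AppE: "par (App M N) t"

lemma par_refl: "par t t"
proof (induction "size t" arbitrary: t rule: less_induct)
  case less
  show ?case
  proof (cases t)
    case (Pi A B)
    with less show ?thesis by (auto intro!: par.p_pi[of _ _ "{}"] simp: size_opn_FVar)
  next
    case (Lam A B)
    with less show ?thesis by (auto intro!: par.p_lam[of _ _ "{}"] simp: size_opn_FVar)
  next
    case (App M N)
    with less show ?thesis by (auto intro!: par.p_app)
  qed (auto intro: par.intros)
qed

lemma par_lc: "par t t' \<Longrightarrow> lc t \<Longrightarrow> lc t'"
proof (induction rule: par.induct)
  case (p_pi A A' S B B')
  obtain x where "x \<notin> S" using obtain_fresh p_pi.hyps(2) .
  then have "lc (opn B' (FVar x))" using p_pi by (simp add: lc_opn)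
  then show ?case using p_pi lc_opn_body by auto
next
  case (p_lam A A' S B B')
  obtain x where "x \<notin> S" using obtain_fresh p_lam.hyps(2) .
  then have "lc (opn B' (FVar x))" using p_lam by (simp add: lc_opn)
  then show ?case using p_lam lc_opn_body by auto
next
  case (p_beta S D D' N N' A)
  obtain x where "x \<notin> S" using obtain_fresh p_beta.hyps(1) .
  then have "lc (opn D' (FVar x))" using p_beta by (simp add: lc_opn)
  then show ?case using p_beta lc_opn_body by (simp add: lc_opn)
qed auto

lemma par_subst: "par t t' \<Longrightarrow> par u u' \<Longrightarrow> lc u \<Longrightarrow> lc u' \<Longrightarrow> par (subst x u t) (subst x u' t')"
proof (induction rule: par.induct)
  case (p_pi A A' S B B')
  then have "par (opn (subst x u B) (FVar y)) (opn (subst x u' B') (FVar y))" if "y \<notin> insert x S" for y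
    using that by (metis insertCI subst_opn_FVar)
  then show ?case
    using p_pi by (auto intro: par.p_pi[of _ _ "insert x S"])
next
  case (p_lam A A' S B B')
  then have "par (opn (subst x u B) (FVar y)) (opn (subst x u' B') (FVar y))" if "y \<notin> insert x S" for y
    using that by (metis insertCI subst_opn_FVar)
  then show ?case
    using p_lam by (auto intro: par.p_lam[of _ _ "insert x S"])
next
  case (p_beta S D D' N N' A)
  then have "par (opn (subst x u D) (FVar y)) (opn (subst x u' D') (FVar y))" if "y \<notin> insert x S" for y
    using that by (metis insertCI subst_opn_FVar)
  then have "par (App (Lam (subst x u A) (subst x u D)) (subst x u N)) (opn (subst x u' D') (subst x u' N'))"
    using p_beta by (auto intro: par.p_beta[of "insert x S"])
  then show ?case
    using p_beta by (simp add: subst_opn)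
qed (auto intro: par.intros)

lemma par_rename:
  "par (opn B (FVar x)) (opn B' (FVar x)) \<Longrightarrow> x \<notin> fv B \<Longrightarrow> x \<notin> fv B'
   \<Longrightarrow> par (opn B (FVar y)) (opn B' (FVar y))"
  using par_subst[of "opn B (FVar x)" "opn B' (FVar x)" "FVar y" "FVar y" x]
  by (simp add: subst_opn_rename p_fvar)

lemma par_opn:
  assumes "finite S" "\<And>x. x \<notin> S \<Longrightarrow> par (opn D (FVar x)) (opn D' (FVar x))"
    and "par N N'" "lc N" "lc N'"
  shows "par (opn D N) (opn D' N')"
proof -
  obtain x where x: "x \<notin> S \<union> fv D \<union> fv D'"
    using obtain_fresh[of "S \<union> fv D \<union> fv D'"] assms(1) by auto
  then have "par (subst x N (opn D (FVar x))) (subst x N' (opn D' (FVar x)))"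
    using assms by (intro par_subst) auto
  then show ?thesis
    using x by (simp add: opn_eq_subst[symmetric])
qed

lemma red_par: "red t t' \<Longrightarrow> par t t'"
proof (induction rule: red.induct)
  case (beta A N M)
  show ?case using par.p_beta[of "{}" N N M M A] par_refl by auto
next
  case (pi1 A A' B)
  then show ?case using par.p_pi[of A A' "{}" B B] par_refl by auto
next
  case (pi2 S B B' A)
  then show ?case using par.p_pi[of A A S B B'] par_refl by auto
next
  case (lam1 A A' B)
  then show ?case using par.p_lam[of A A' "{}" B B] par_refl by auto
next
  case (lam2 S B B' A)
  then show ?case using par.p_lam[of A A S B B'] par_refl by auto
qed (auto intro: par.p_app par_refl)

lemma par_reds: "par t t' \<Longrightarrow> lc t \<Longrightarrow> reds t t'"
proof (induction rule: par.induct)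
  case (p_pi A A' S B B')
  have "reds (Pi A' B) (Pi A' B')"
    by (rule reds_binder[of "Pi A'" S]) (use p_pi in \<open>auto intro: red.pi2 simp: lc_opn\<close>)
  with p_pi show ?case by (meson lc_at.simps(4) reds_Pi_dom rtranclp_trans)
next
  case (p_lam A A' S B B')
  have "reds (Lam A' B) (Lam A' B')"
    by (rule reds_binder[of "Lam A'" S]) (use p_lam in \<open>auto intro: red.lam2 simp: lc_opn\<close>)
  with p_lam show ?case by (meson lc_at.simps(6) reds_Lam_dom rtranclp_trans)
next
  case (p_beta S D D' N N' A)
  have "reds (Lam A D) (Lam A D')"
    by (rule reds_binder[of "Lam A" S]) (use p_beta in \<open>auto intro: red.lam2 simp: lc_opn\<close>)
  then have "reds (App (Lam A D) N) (App (Lam A D') N')"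
    using p_beta by (auto intro: reds_App)
  then show ?case by (meson red.beta rtranclp.rtrancl_into_rtrancl)
qed (auto intro: reds_App)

text \<open>The joint reduct is found at a single fresh name and closed over it; renaming
  (\<open>par_rename\<close>) transports it to every other name.\<close>

lemma par_body_join:
  assumes S1: "finite S1" and S2: "finite S2"
    and join1: "\<And>x t2. x \<notin> S1 \<Longrightarrow> par (opn B (FVar x)) t2 \<Longrightarrow> lc (opn B (FVar x))
      \<Longrightarrow> \<exists>t3. par (opn B1 (FVar x)) t3 \<and> par t2 t3"
    and step2: "\<And>x. x \<notin> S2 \<Longrightarrow> par (opn B (FVar x)) (opn B2 (FVar x))"
    and lcB: "lc_at (Suc 0) B"
  shows "\<exists>B3. \<forall>y. par (opn B1 (FVar y)) (opn B3 (FVar y)) \<and> par (opn B2 (FVar y)) (opn B3 (FVar y))"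
proof -
  obtain x where x: "x \<notin> S1 \<union> S2 \<union> fv B \<union> fv B1 \<union> fv B2"
    using obtain_fresh[of "S1 \<union> S2 \<union> fv B \<union> fv B1 \<union> fv B2"] S1 S2 by auto
  have lc: "lc (opn B (FVar x))" using lcB by (simp add: lc_opn)
  then obtain t3 where t3: "par (opn B1 (FVar x)) t3" "par (opn B2 (FVar x)) t3"
    using join1[of x] step2[of x] x by blast
  have "lc t3" using step2[of x] x lc t3(2) par_lc by blast
  then have B3: "opn (cls x t3) (FVar x) = t3" "x \<notin> fv (cls x t3)"
    by (simp_all add: opn_cls fv_cls)
  have "par (opn B1 (FVar y)) (opn (cls x t3) (FVar y))" for y
    using par_rename[of B1 x "cls x t3" y] t3(1) B3 x by auto
  moreover have "par (opn B2 (FVar y)) (opn (cls x t3) (FVar y))" for y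
    using par_rename[of B2 x "cls x t3" y] t3(2) B3 x by auto
  ultimately show ?thesis by blast
qed

lemma par_App_Lam_inv:
  assumes "par (App (Lam A D) N) t"
  shows "\<exists>D' N' S. finite S \<and> (\<forall>x. x \<notin> S \<longrightarrow> par (opn D (FVar x)) (opn D' (FVar x))) \<and> par N N' \<and>
    ((\<exists>A'. t = App (Lam A' D') N') \<or> t = opn D' N')"
  using assms
proof (rule par_AppE)
  fix L N' assume "t = App L N'" "par (Lam A D) L" "par N N'"
  then show ?thesis by (elim par_LamE) blast
qed blast

lemma par_diamond_beta:
  assumes S1: "finite S1"
    and joinD: "\<And>x t2. x \<notin> S1 \<Longrightarrow> par (opn D (FVar x)) t2 \<Longrightarrow> lc (opn D (FVar x))
      \<Longrightarrow> \<exists>t3. par (opn D1 (FVar x)) t3 \<and> par t2 t3"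
    and joinN: "\<And>t2. par N t2 \<Longrightarrow> \<exists>t3. par N1 t3 \<and> par t2 t3"
    and N1: "par N N1" and lc: "lc (App (Lam A D) N)"
    and t2: "par (App (Lam A D) N) t2"
  shows "\<exists>t3. par (opn D1 N1) t3 \<and> par t2 t3"
proof -
  obtain D2 N2 S2 where D2: "finite S2" "\<forall>x. x \<notin> S2 \<longrightarrow> par (opn D (FVar x)) (opn D2 (FVar x))"
    and N2: "par N N2" and t2_cases: "(\<exists>A2. t2 = App (Lam A2 D2) N2) \<or> t2 = opn D2 N2"
    using par_App_Lam_inv[OF t2] by blast
  have lcD: "lc_at (Suc 0) D" using lc by simp
  obtain D3 where D3: "\<And>y. par (opn D1 (FVar y)) (opn D3 (FVar y))"
      "\<And>y. par (opn D2 (FVar y)) (opn D3 (FVar y))"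
    using par_body_join[OF S1 D2(1) joinD _ lcD] D2(2) by blast
  obtain N3 where N3: "par N1 N3" "par N2 N3" using joinN N2 by blast
  have lcN: "lc N1" "lc N2" "lc N3"
    using lc N1 N2 N3(1) par_lc by simp_all
  have "par (opn D1 N1) (opn D3 N3)"
    by (rule par_opn[of "{}"]) (use D3(1) N3(1) lcN in simp_all)
  moreover have "par t2 (opn D3 N3)"
    using t2_cases
  proof
    assume "\<exists>A2. t2 = App (Lam A2 D2) N2"
    then show ?thesis using D3(2) N3(2) by (auto intro: par.p_beta[of "{}"])
  next
    assume "t2 = opn D2 N2"
    moreover have "par (opn D2 N2) (opn D3 N3)"
      by (rule par_opn[of "{}"]) (use D3(2) N3(2) lcN in simp_all)
    ultimately show ?thesis by simp
  qed
  ultimately show ?thesis by blast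
qed

lemma par_diamond_app_beta:
  assumes joinM: "\<And>t2. par (Lam A D) t2 \<Longrightarrow> \<exists>t3. par M1 t3 \<and> par t2 t3"
    and M1: "par (Lam A D) M1"
    and joinN: "\<And>t2. par N t2 \<Longrightarrow> \<exists>t3. par N1 t3 \<and> par t2 t3"
    and D2: "finite S2" "\<And>x. x \<notin> S2 \<Longrightarrow> par (opn D (FVar x)) (opn D2 (FVar x))"
    and N2: "par N N2" and lcN: "lc N"
  shows "\<exists>t3. par (App M1 N1) t3 \<and> par (opn D2 N2) t3"
proof -
  have "par (Lam A D) (Lam A D2)" using D2 by (intro par.p_lam[OF par_refl, of S2])
  then obtain t3 where t3: "par M1 t3" "par (Lam A D2) t3" using joinM by blast
  obtain A1 D1 where M1_eq: "M1 = Lam A1 D1" using M1 by (elim par_LamE) blast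
  obtain A3 D3 S3 where t3_eq: "t3 = Lam A3 D3" and D3: "finite S3"
      "\<And>x. x \<notin> S3 \<Longrightarrow> par (opn D2 (FVar x)) (opn D3 (FVar x))"
    using t3(2) by (elim par_LamE) blast
  obtain S13 where D13: "finite S13" "\<And>x. x \<notin> S13 \<Longrightarrow> par (opn D1 (FVar x)) (opn D3 (FVar x))"
    using t3(1) unfolding M1_eq t3_eq by (elim par_LamE) blast
  obtain N3 where N3: "par N1 N3" "par N2 N3" using joinN N2 by blast
  have lcN: "lc N2" "lc N3" using lcN N2 N3(2) par_lc by auto
  have "par (App M1 N1) (opn D3 N3)" using M1_eq D13 N3(1) by (auto intro: par.p_beta[of S13])
  moreover have "par (opn D2 N2) (opn D3 N3)" by (rule par_opn[of S3]) (use D3 N3 lcN in auto)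
  ultimately show ?thesis by blast
qed

lemma par_diamond: "par t t1 \<Longrightarrow> par t t2 \<Longrightarrow> lc t \<Longrightarrow> \<exists>t3. par t1 t3 \<and> par t2 t3"
proof (induction arbitrary: t2 rule: par.induct)
  case (p_pi A A1 S1 B B1)
  obtain A2 B2 S2 where t2: "t2 = Pi A2 B2" "par A A2" "finite S2"
      "\<And>x. x \<notin> S2 \<Longrightarrow> par (opn B (FVar x)) (opn B2 (FVar x))"
    using p_pi.prems(1) by (elim par_PiE) blast
  obtain A3 where "par A1 A3" "par A2 A3" using p_pi.IH(1)[OF t2(2)] p_pi.prems(2) by auto
  moreover obtain B3 where "\<And>y. par (opn B1 (FVar y)) (opn B3 (FVar y))"
      "\<And>y. par (opn B2 (FVar y)) (opn B3 (FVar y))"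
    using par_body_join[of S1 S2 B B1 B2] p_pi t2 by (metis lc_at.simps(4))
  ultimately show ?case using t2(1) by (blast intro: par.p_pi[of _ _ "{}"])
next
  case (p_lam A A1 S1 B B1)
  obtain A2 B2 S2 where t2: "t2 = Lam A2 B2" "par A A2" "finite S2"
      "\<And>x. x \<notin> S2 \<Longrightarrow> par (opn B (FVar x)) (opn B2 (FVar x))"
    using p_lam.prems(1) by (elim par_LamE) blast
  obtain A3 where "par A1 A3" "par A2 A3" using p_lam.IH(1)[OF t2(2)] p_lam.prems(2) by auto
  moreover obtain B3 where "\<And>y. par (opn B1 (FVar y)) (opn B3 (FVar y))"
      "\<And>y. par (opn B2 (FVar y)) (opn B3 (FVar y))"
    using par_body_join[of S1 S2 B B1 B2] p_lam t2 by (metis lc_at.simps(6))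
  ultimately show ?case using t2(1) by (blast intro: par.p_lam[of _ _ "{}"])
next
  case (p_app M M1 N N1)
  from p_app.prems(1) show ?case
  proof (rule par_AppE)
    fix M2 N2 assume "t2 = App M2 N2" "par M M2" "par N N2"
    moreover obtain M3 where "par M1 M3" "par M2 M3" using p_app \<open>par M M2\<close> by auto
    moreover obtain N3 where "par N1 N3" "par N2 N3" using p_app \<open>par N N2\<close> by auto
    ultimately show ?thesis by (blast intro: par.p_app)
  next
    fix S2 D D2 N2 A assume "M = Lam A D" "t2 = opn D2 N2" "finite S2"
      "\<And>x. x \<notin> S2 \<Longrightarrow> par (opn D (FVar x)) (opn D2 (FVar x))" "par N N2"
    with p_app have "\<exists>t3. par (App M1 N1) t3 \<and> par (opn D2 N2) t3"
      by (intro par_diamond_app_beta[of A D M1 N N1 S2 D2 N2]) auto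
    with \<open>t2 = opn D2 N2\<close> show ?thesis by simp
  qed
next
  case (p_beta S1 D D1 N N1 A)
  then show ?case by (intro par_diamond_beta[of S1 D D1 N N1 A]) auto
qed (auto elim: par.cases intro: par_refl)

text \<open>Parallel reduction is diamond only on locally closed terms, so the abstract confluence
  theorem is applied to its restriction to them.\<close>

theorem church_rosser:
  assumes "reds t t1" "reds t t2" "lc t"
  obtains t3 where "reds t1 t3" "reds t2 t3"
proof -
  let ?p = "\<lambda>s s'. lc s \<and> par s s'"
  have "strong_confluentp ?p"
  proof
    fix s s1 s2 assume "?p s s1" "?p s s2"
    then obtain s3 where "par s1 s3" "par s2 s3" using par_diamond by blast
    moreover have "lc s1" "lc s2" using \<open>?p s s1\<close> \<open>?p s s2\<close> par_lc by blast+
    ultimately show "\<exists>u. ?p\<^sup>*\<^sup>* s1 u \<and> ?p\<^sup>=\<^sup>= s2 u" by blast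
  qed
  then have confl: "confluentp ?p" by (rule strong_confluentp_imp_confluentp)
  have to_par: "?p\<^sup>*\<^sup>* s s'" if "reds s s'" "lc s" for s s'
    using that
  proof (induction rule: rtranclp_induct)
    case (step s' s'')
    then have "?p s' s''" using reds_lc red_par by blast
    moreover have "?p\<^sup>*\<^sup>* s s'" using step.IH step.prems by blast
    ultimately show ?case by (simp add: rtranclp.rtrancl_into_rtrancl)
  qed simp
  have of_par: "reds s s'" if "?p\<^sup>*\<^sup>* s s'" for s s'
    using that by (induction rule: rtranclp_induct) (auto intro: par_reds rtranclp_trans)
  obtain u where "?p\<^sup>*\<^sup>* t1 u" "?p\<^sup>*\<^sup>* t2 u"
    using confluentpD[OF confl to_par[OF assms(1,3)] to_par[OF assms(2,3)]] by blast
  then show ?thesis using that of_par by blast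
qed

lemma reds_opn_arg: "reds N N' \<Longrightarrow> lc N \<Longrightarrow> lc_at (Suc 0) B \<Longrightarrow> reds (opn B N) (opn B N')"
proof (induction rule: rtranclp_induct)
  case (step N' N'')
  have lcN: "lc N'" "lc N''" using step reds_lc red_lc by blast+
  have "par (opn B N') (opn B N'')"
    by (rule par_opn[of "{}"]) (use step.hyps(2) lcN in \<open>auto intro: par_refl red_par\<close>)
  then have "reds (opn B N') (opn B N'')"
    using lcN step.prems(2) lc_opn par_reds by blast
  with step show ?case by (meson rtranclp_trans)
qed simp

section \<open>Typing with conversion as joinability\<close>

definition conv :: "trm \<Rightarrow> trm \<Rightarrow> bool" where
  "conv A B \<longleftrightarrow> (\<exists>C. reds A C \<and> reds B C)"

lemma reds_conv: "reds A B \<Longrightarrow> conv A B"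
  and reds_conv_sym: "reds A B \<Longrightarrow> conv B A"
  by (auto simp: conv_def)

lemma conv_sym: "conv A B \<Longrightarrow> conv B A"
  by (auto simp: conv_def)

lemma conv_trans: "conv A B \<Longrightarrow> conv B C \<Longrightarrow> lc B \<Longrightarrow> conv A C"
  unfolding conv_def by (meson church_rosser rtranclp_trans)

lemma conv_subst: "conv A B \<Longrightarrow> lc u \<Longrightarrow> conv (subst x u A) (subst x u B)"
  unfolding conv_def using reds_subst by blast

lemma conv_Pi_inj:
  assumes "conv (Pi A B) (Pi A' B')"
  obtains S where "conv A A'" "finite S" "\<forall>x. x \<notin> S \<longrightarrow> conv (opn B (FVar x)) (opn B' (FVar x))"
proof -
  obtain C where "reds (Pi A B) C" "reds (Pi A' B') C"
    using assms by (auto simp: conv_def)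
  then obtain A1 B1 S1 A2 B2 S2 where "Pi A1 B1 = Pi A2 B2" "reds A A1" "reds A' A2"
    "finite S1" "\<forall>x. x \<notin> S1 \<longrightarrow> reds (opn B (FVar x)) (opn B1 (FVar x))"
    "finite S2" "\<forall>x. x \<notin> S2 \<longrightarrow> reds (opn B' (FVar x)) (opn B2 (FVar x))"
    by (metis reds_Pi_inv)
  then show ?thesis
    by (intro that[of "S1 \<union> S2"]) (auto simp: conv_def)
qed

lemma conv_Pi_Univ: "\<not> conv (Pi A B) (Univ i)"
  by (auto simp: conv_def dest!: reds_Univ reds_Pi_inv)

text \<open>The paper's typing relation, with conversion restricted to joinability and with the
  domain of a \<open>\<lambda>\<close> required to be a type; \<open>typing_iff_ty\<close> shows that nothing changes.\<close>

inductive wfc :: "ctx \<Rightarrow> bool" and ty :: "ctx \<Rightarrow> trm \<Rightarrow> trm \<Rightarrow> bool" where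
  wfc_nil: "wfc []"
| wfc_snoc: "wfc \<Gamma> \<Longrightarrow> ty \<Gamma> A (Univ i) \<Longrightarrow> x \<notin> cdom \<Gamma> \<Longrightarrow> wfc (\<Gamma> @ [(x, A)])"
| ty_var: "wfc \<Gamma> \<Longrightarrow> (x, A) \<in> set \<Gamma> \<Longrightarrow> ty \<Gamma> (FVar x) A"
| ty_univ: "wfc \<Gamma> \<Longrightarrow> ty \<Gamma> (Univ i) (Univ (Suc i))"
| ty_pi: "ty \<Gamma> A (Univ i) \<Longrightarrow> finite S \<Longrightarrow>
         (\<And>x. x \<notin> S \<Longrightarrow> ty (\<Gamma> @ [(x, A)]) (opn B (FVar x)) (Univ j)) \<Longrightarrow>
         ty \<Gamma> (Pi A B) (Univ (max i j))"
| ty_app: "ty \<Gamma> M (Pi A B) \<Longrightarrow> ty \<Gamma> N A \<Longrightarrow> ty \<Gamma> (App M N) (opn B N)"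
| ty_lam: "ty \<Gamma> A (Univ i) \<Longrightarrow> finite S \<Longrightarrow>
         (\<And>x. x \<notin> S \<Longrightarrow> ty (\<Gamma> @ [(x, A)]) (opn M (FVar x)) (opn B (FVar x))) \<Longrightarrow>
         ty \<Gamma> (Lam A M) (Pi A B)"
| ty_conv: "ty \<Gamma> M A \<Longrightarrow> ty \<Gamma> B (Univ i) \<Longrightarrow> conv A B \<Longrightarrow> ty \<Gamma> M B"

lemmas ty_induct = wfc_ty.inducts(2)[where ?P1.0="\<lambda>_. True", consumes 1,
  case_names wfc_nil wfc_snoc ty_var ty_univ ty_pi ty_app ty_lam ty_conv]

lemma cdom_Nil [simp]: "cdom [] = {}"
  and cdom_append [simp]: "cdom (\<Gamma> @ \<Delta>) = cdom \<Gamma> \<union> cdom \<Delta>"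
  and cdom_Cons [simp]: "cdom ((x, A) # \<Gamma>) = insert x (cdom \<Gamma>)"
  and cdom_map_apsnd [simp]: "cdom (map (apsnd f) \<Gamma>) = cdom \<Gamma>"
  and finite_cdom [simp]: "finite (cdom \<Gamma>)"
  by (force simp: cdom_def)+

lemma in_cdom: "(x, A) \<in> set \<Gamma> \<Longrightarrow> x \<in> cdom \<Gamma>"
  by (force simp: cdom_def)

lemma ty_wfc: "ty \<Gamma> M A \<Longrightarrow> wfc \<Gamma>"
  by (induction rule: ty_induct) (auto intro: wfc_ty.intros)

lemma wfc_snocE:
  assumes "wfc (\<Gamma> @ [(x, A)])"
  obtains i where "wfc \<Gamma>" "ty \<Gamma> A (Univ i)" "x \<notin> cdom \<Gamma>"
  using assms by (cases rule: wfc.cases) auto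

lemma wfc_prefix: "wfc (\<Gamma> @ \<Delta>) \<Longrightarrow> wfc \<Gamma>"
proof (induction \<Delta> rule: rev_induct)
  case (snoc p \<Delta>)
  then show ?case by (cases p) (metis append.assoc wfc_snocE)
qed simp

lemma wfc_ty_closed:
  shows "wfc \<Gamma> \<Longrightarrow> distinct (map fst \<Gamma>) \<and> (\<forall>(x, A) \<in> set \<Gamma>. lc A \<and> fv A \<subseteq> cdom \<Gamma>)"
    and "ty \<Gamma> M T \<Longrightarrow> lc M \<and> lc T \<and> fv M \<union> fv T \<subseteq> cdom \<Gamma>"
proof (induction rule: wfc_ty.inducts)
  case (wfc_snoc \<Gamma> A i x)
  then show ?case by (auto simp: cdom_def)
next
  case (ty_var \<Gamma> x A)
  then show ?case by (auto dest: in_cdom)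
next
  case (ty_pi \<Gamma> A i S B j)
  obtain x where x: "x \<notin> S \<union> fv B \<union> cdom \<Gamma>"
    using obtain_fresh[of "S \<union> fv B \<union> cdom \<Gamma>"] ty_pi.hyps(2) by auto
  then have "lc (opn B (FVar x))" "fv (opn B (FVar x)) \<subseteq> insert x (cdom \<Gamma>)"
    using ty_pi.IH(2)[of x] by auto
  then show ?case
    using ty_pi.IH(1) fv_subset_opn[of B "FVar x"] x by (auto intro: lc_opn_body)
next
  case (ty_app \<Gamma> M A B N)
  then show ?case
    using fv_opn_subset[of B N] by (auto simp: lc_opn)
next
  case (ty_lam \<Gamma> A i S M B)
  obtain x where x: "x \<notin> S \<union> fv B \<union> fv M \<union> cdom \<Gamma>"
    using obtain_fresh[of "S \<union> fv B \<union> fv M \<union> cdom \<Gamma>"] ty_lam.hyps(2) by auto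
  then have "lc (opn M (FVar x))" "lc (opn B (FVar x))"
      "fv (opn M (FVar x)) \<union> fv (opn B (FVar x)) \<subseteq> insert x (cdom \<Gamma>)"
    using ty_lam.IH(2)[of x] by auto
  then show ?case
    using ty_lam.IH(1) fv_subset_opn[of B "FVar x"] fv_subset_opn[of M "FVar x"] x
    by (auto intro: lc_opn_body)
qed auto

lemma wfc_distinct: "wfc \<Gamma> \<Longrightarrow> distinct (map fst \<Gamma>)"
  and wfc_entry_closed: "wfc \<Gamma> \<Longrightarrow> (x, A) \<in> set \<Gamma> \<Longrightarrow> fv A \<subseteq> cdom \<Gamma>"
  and ty_lc: "ty \<Gamma> M T \<Longrightarrow> lc M \<and> lc T"
  and ty_fv: "ty \<Gamma> M T \<Longrightarrow> fv M \<union> fv T \<subseteq> cdom \<Gamma>"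
  using wfc_ty_closed by fast+

lemma wfc_entry_unique: "wfc \<Gamma> \<Longrightarrow> (x, A) \<in> set \<Gamma> \<Longrightarrow> (x, B) \<in> set \<Gamma> \<Longrightarrow> A = B"
  by (metis wfc_distinct eq_key_imp_eq_value)

lemma ty_weaken: "ty \<Gamma> M A \<Longrightarrow> wfc \<Delta> \<Longrightarrow> set \<Gamma> \<subseteq> set \<Delta> \<Longrightarrow> ty \<Delta> M A"
proof (induction arbitrary: \<Delta> rule: ty_induct)
  case (ty_pi \<Gamma> A i S B j)
  have A: "ty \<Delta> A (Univ i)" using ty_pi by blast
  show ?case
  proof (rule wfc_ty.ty_pi[OF A, of "S \<union> cdom \<Delta>"])
    fix x assume x: "x \<notin> S \<union> cdom \<Delta>"
    then have "wfc (\<Delta> @ [(x, A)])" using A ty_pi.prems by (auto intro: wfc_snoc)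
    then show "ty (\<Delta> @ [(x, A)]) (opn B (FVar x)) (Univ j)"
      using ty_pi.IH(2)[of x "\<Delta> @ [(x, A)]"] x ty_pi.prems by auto
  qed (use ty_pi in simp)
next
  case (ty_lam \<Gamma> A i S M B)
  have A: "ty \<Delta> A (Univ i)" using ty_lam by blast
  show ?case
  proof (rule wfc_ty.ty_lam[OF A, of "S \<union> cdom \<Delta>"])
    fix x assume x: "x \<notin> S \<union> cdom \<Delta>"
    then have "wfc (\<Delta> @ [(x, A)])" using A ty_lam.prems by (auto intro: wfc_snoc)
    then show "ty (\<Delta> @ [(x, A)]) (opn M (FVar x)) (opn B (FVar x))"
      using ty_lam.IH(2)[of x "\<Delta> @ [(x, A)]"] x ty_lam.prems by auto
  qed (use ty_lam in simp)
next
  case (ty_app \<Gamma> M A B N)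
  then show ?case by (blast intro: wfc_ty.ty_app)
next
  case (ty_conv \<Gamma> M A B i)
  then show ?case by (blast intro: wfc_ty.ty_conv)
qed (auto intro: wfc_ty.ty_var wfc_ty.ty_univ)

lemma wfc_entry_type: "wfc \<Gamma> \<Longrightarrow> (x, A) \<in> set \<Gamma> \<Longrightarrow> \<exists>i. ty \<Gamma> A (Univ i)"
proof (induction \<Gamma> rule: rev_induct)
  case (snoc p \<Gamma>)
  obtain y B where p: "p = (y, B)" by (cases p)
  with snoc.prems obtain j where \<Gamma>: "wfc \<Gamma>" and B: "ty \<Gamma> B (Univ j)"
    by (auto elim: wfc_snocE)
  then obtain i where "ty \<Gamma> A (Univ i)"
    using snoc p by (cases "(x, A) = (y, B)") auto
  then have "ty (\<Gamma> @ [p]) A (Univ i)"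
    by (rule ty_weaken) (use snoc.prems in auto)
  then show ?case ..
qed simp

lemma ty_subst_FVar:
  assumes N: "ty \<Gamma> N C" and wf: "wfc (\<Gamma> @ [(x, C)] @ \<Theta>)" and y: "(y, A) \<in> set (\<Gamma> @ [(x, C)] @ \<Theta>)"
    and wfN: "wfc (\<Gamma> @ map (apsnd (subst x N)) \<Theta>)"
  shows "ty (\<Gamma> @ map (apsnd (subst x N)) \<Theta>) (subst x N (FVar y)) (subst x N A)"
proof -
  have "wfc (\<Gamma> @ [(x, C)])" using wfc_prefix[of "\<Gamma> @ [(x, C)]" \<Theta>] wf by simp
  then obtain i where \<Gamma>: "wfc \<Gamma>" and C: "ty \<Gamma> C (Univ i)" and x: "x \<notin> cdom \<Gamma>"
    by (rule wfc_snocE)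
  show ?thesis
  proof (cases "y = x")
    case True
    then have "A = C" using wfc_entry_unique[OF wf] y by auto
    moreover have "x \<notin> fv C" using C x ty_fv by blast
    moreover have "ty (\<Gamma> @ map (apsnd (subst x N)) \<Theta>) N C" using ty_weaken[OF N wfN] by auto
    ultimately show ?thesis using True by (simp add: subst_fresh)
  next
    case False
    then consider "(y, A) \<in> set \<Gamma>" | "(y, A) \<in> set \<Theta>" using y by auto
    then show ?thesis
    proof cases
      case 1
      then have "x \<notin> fv A" using wfc_entry_closed[OF \<Gamma>] x by blast
      with False 1 wfN show ?thesis by (auto simp: subst_fresh intro: ty_var)
    next
      case 2
      with False wfN show ?thesis by (force intro: ty_var)
    qed
  qed
qed

lemma ty_subst_gen:
  assumes N: "ty \<Gamma> N C"
  shows "ty \<Gamma>' M T \<Longrightarrow> \<Gamma>' = \<Gamma> @ [(x, C)] @ \<Theta> \<Longrightarrow> wfc (\<Gamma> @ map (apsnd (subst x N)) \<Theta>)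
    \<Longrightarrow> ty (\<Gamma> @ map (apsnd (subst x N)) \<Theta>) (subst x N M) (subst x N T)"
proof (induction arbitrary: \<Theta> rule: ty_induct)
  case (ty_var \<Gamma>' y A)
  then show ?case using ty_subst_FVar[OF N] by blast
next
  case (ty_pi \<Gamma>' A i S B j)
  let ?\<Gamma>N = "\<Gamma> @ map (apsnd (subst x N)) \<Theta>"
  have A: "ty ?\<Gamma>N (subst x N A) (Univ i)" using ty_pi.IH(1) ty_pi.prems by simp
  show ?case
  proof (simp, rule wfc_ty.ty_pi[OF A, of "insert x (S \<union> cdom ?\<Gamma>N)"])
    fix y assume y: "y \<notin> insert x (S \<union> cdom ?\<Gamma>N)"
    then have "wfc (?\<Gamma>N @ [(y, subst x N A)])" using wfc_snoc[OF ty_pi.prems(2) A] by simp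
    then show "ty (?\<Gamma>N @ [(y, subst x N A)]) (opn (subst x N B) (FVar y)) (Univ j)"
      using ty_pi.IH(2)[of y "\<Theta> @ [(y, A)]"] ty_pi.prems(1) y ty_lc[OF N] by (simp add: subst_opn_FVar)
  qed (use ty_pi in simp)
next
  case (ty_app \<Gamma>' M A B N')
  then have "ty (\<Gamma> @ map (apsnd (subst x N)) \<Theta>) (App (subst x N M) (subst x N N'))
      (opn (subst x N B) (subst x N N'))"
    by (auto intro: wfc_ty.ty_app)
  then show ?case using ty_lc[OF N] by (simp add: subst_opn)
next
  case (ty_lam \<Gamma>' A i S M B)
  let ?\<Gamma>N = "\<Gamma> @ map (apsnd (subst x N)) \<Theta>"
  have A: "ty ?\<Gamma>N (subst x N A) (Univ i)" using ty_lam.IH(1) ty_lam.prems by simp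
  show ?case
  proof (simp, rule wfc_ty.ty_lam[OF A, of "insert x (S \<union> cdom ?\<Gamma>N)"])
    fix y assume y: "y \<notin> insert x (S \<union> cdom ?\<Gamma>N)"
    then have "wfc (?\<Gamma>N @ [(y, subst x N A)])" using wfc_snoc[OF ty_lam.prems(2) A] by simp
    then show "ty (?\<Gamma>N @ [(y, subst x N A)]) (opn (subst x N M) (FVar y)) (opn (subst x N B) (FVar y))"
      using ty_lam.IH(2)[of y "\<Theta> @ [(y, A)]"] ty_lam.prems(1) y ty_lc[OF N] by (simp add: subst_opn_FVar)
  qed (use ty_lam in simp)
next
  case (ty_conv \<Gamma>' M A B i)
  then show ?case using ty_lc[OF N] by (auto intro: wfc_ty.ty_conv conv_subst)
qed (auto intro: ty_univ)

lemma wfc_subst: "ty \<Gamma> N C \<Longrightarrow> wfc (\<Gamma> @ [(x, C)] @ \<Theta>) \<Longrightarrow> wfc (\<Gamma> @ map (apsnd (subst x N)) \<Theta>)"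
proof (induction \<Theta> rule: rev_induct)
  case (snoc p \<Theta>)
  obtain y A where p: "p = (y, A)" by (cases p)
  with snoc.prems obtain i where \<Theta>: "wfc (\<Gamma> @ [(x, C)] @ \<Theta>)" and A: "ty (\<Gamma> @ [(x, C)] @ \<Theta>) A (Univ i)"
      and y: "y \<notin> cdom (\<Gamma> @ [(x, C)] @ \<Theta>)"
    by (metis append_assoc wfc_snocE)
  have wfN: "wfc (\<Gamma> @ map (apsnd (subst x N)) \<Theta>)" using snoc.IH snoc.prems(1) \<Theta> by blast
  moreover have "ty (\<Gamma> @ map (apsnd (subst x N)) \<Theta>) (subst x N A) (Univ i)"
    using ty_subst_gen[OF snoc.prems(1) A refl wfN] by simp
  ultimately have "wfc ((\<Gamma> @ map (apsnd (subst x N)) \<Theta>) @ [(y, subst x N A)])"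
    by (rule wfc_snoc) (use y in auto)
  with p show ?case by simp
qed (simp add: ty_wfc)

lemma ty_subst: "ty (\<Gamma> @ [(x, C)]) M T \<Longrightarrow> ty \<Gamma> N C \<Longrightarrow> ty \<Gamma> (subst x N M) (subst x N T)"
  using ty_subst_gen[of \<Gamma> N C _ M T x "[]"] ty_wfc by simp

lemma ty_opn:
  "ty (\<Gamma> @ [(x, C)]) (opn M (FVar x)) (opn T (FVar x)) \<Longrightarrow> x \<notin> fv M \<Longrightarrow> x \<notin> fv T
   \<Longrightarrow> ty \<Gamma> N C \<Longrightarrow> ty \<Gamma> (opn M N) (opn T N)"
  by (metis ty_subst opn_eq_subst)

lemma ty_rename:
  assumes t: "ty (\<Gamma> @ [(x, A)]) t T" and y: "y \<notin> cdom \<Gamma>" "y \<noteq> x"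
  shows "ty (\<Gamma> @ [(y, A)]) (subst x (FVar y) t) (subst x (FVar y) T)"
proof -
  obtain i where \<Gamma>: "wfc \<Gamma>" and A: "ty \<Gamma> A (Univ i)" and x: "x \<notin> cdom \<Gamma>"
    using t ty_wfc wfc_snocE by metis
  have wy: "wfc (\<Gamma> @ [(y, A)])" using \<Gamma> A y(1) by (rule wfc_snoc)
  have "ty (\<Gamma> @ [(y, A)]) A (Univ i)" using ty_weaken[OF A wy] by auto
  then have "wfc ((\<Gamma> @ [(y, A)]) @ [(x, A)])" using wfc_snoc[OF wy] x y by auto
  then have "ty ((\<Gamma> @ [(y, A)]) @ [(x, A)]) t T" by (rule ty_weaken[OF t]) auto
  moreover have "ty (\<Gamma> @ [(y, A)]) (FVar y) A" using wy by (auto intro: ty_var)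
  ultimately show ?thesis by (rule ty_subst)
qed

lemma ty_rename_opn:
  "ty (\<Gamma> @ [(x, A)]) (opn M (FVar x)) (opn T (FVar x)) \<Longrightarrow> x \<notin> fv M \<Longrightarrow> x \<notin> fv T
   \<Longrightarrow> y \<notin> cdom \<Gamma> \<Longrightarrow> ty (\<Gamma> @ [(y, A)]) (opn M (FVar y)) (opn T (FVar y))"
  by (cases "y = x") (auto dest: ty_rename simp: subst_opn_rename)

lemma ty_Pi_fresh:
  assumes A: "ty \<Gamma> A (Univ i)" and B: "ty (\<Gamma> @ [(x, A)]) (opn B (FVar x)) (Univ j)" and x: "x \<notin> fv B"
  shows "ty \<Gamma> (Pi A B) (Univ (max i j))"
proof (rule ty_pi[OF A, of "cdom \<Gamma>"])
  fix y assume "y \<notin> cdom \<Gamma>"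
  then show "ty (\<Gamma> @ [(y, A)]) (opn B (FVar y)) (Univ j)"
    using ty_rename_opn[of \<Gamma> x A B "Univ j" y] B x by simp
qed simp

lemma ty_Lam_fresh:
  assumes A: "ty \<Gamma> A (Univ i)" and M: "ty (\<Gamma> @ [(x, A)]) (opn M (FVar x)) (opn B (FVar x))"
    and x: "x \<notin> fv M" "x \<notin> fv B"
  shows "ty \<Gamma> (Lam A M) (Pi A B)"
proof (rule ty_lam[OF A, of "cdom \<Gamma>"])
  fix y assume "y \<notin> cdom \<Gamma>"
  then show "ty (\<Gamma> @ [(y, A)]) (opn M (FVar y)) (opn B (FVar y))"
    using ty_rename_opn[OF M x] by simp
qed simp

text \<open>Add a fresh copy of the variable with the new type, substitute it for the old one,
  and rename it back.\<close>

lemma ty_ctx_conv: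
  assumes M: "ty (\<Gamma> @ [(x, A)]) M T" and A': "ty \<Gamma> A' (Univ k)" and conv: "conv A' A"
  shows "ty (\<Gamma> @ [(x, A')]) M T"
proof -
  obtain i where \<Gamma>: "wfc \<Gamma>" and A: "ty \<Gamma> A (Univ i)" and x: "x \<notin> cdom \<Gamma>"
    using M ty_wfc wfc_snocE by metis
  obtain y where y: "y \<notin> insert x (cdom \<Gamma> \<union> fv M \<union> fv T)"
    using obtain_fresh[of "insert x (cdom \<Gamma> \<union> fv M \<union> fv T)"] by auto
  let ?\<Gamma>y = "\<Gamma> @ [(y, A')]"
  have wy: "wfc ?\<Gamma>y" using wfc_snoc[OF \<Gamma> A'] y by auto
  have Ay: "ty ?\<Gamma>y A (Univ i)" using ty_weaken[OF A wy] by auto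
  then have "wfc (?\<Gamma>y @ [(x, A)])" using wfc_snoc[OF wy] x y by auto
  then have "ty (?\<Gamma>y @ [(x, A)]) M T" by (rule ty_weaken[OF M]) auto
  moreover have "ty ?\<Gamma>y (FVar y) A" using ty_conv[OF ty_var[OF wy, of y A'] Ay conv] by simp
  ultimately have "ty ?\<Gamma>y (subst x (FVar y) M) (subst x (FVar y) T)" by (rule ty_subst)
  then have "ty (\<Gamma> @ [(x, A')])
      (subst y (FVar x) (subst x (FVar y) M)) (subst y (FVar x) (subst x (FVar y) T))"
    by (rule ty_rename) (use x y in auto)
  then show ?thesis using y by (simp add: subst_rename_back)
qed

lemma ty_Pi_inv:
  "ty \<Gamma> (Pi A B) T \<Longrightarrow> \<exists>i j S. ty \<Gamma> A (Univ i) \<and> finite S \<and>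
     (\<forall>x. x \<notin> S \<longrightarrow> ty (\<Gamma> @ [(x, A)]) (opn B (FVar x)) (Univ j)) \<and> conv (Univ (max i j)) T"
proof (induction \<Gamma> "Pi A B" T rule: ty_induct)
  case (ty_pi \<Gamma> i S j)
  then show ?case by (auto simp: conv_def)
next
  case (ty_conv \<Gamma> A0 B0 i)
  then show ?case by (meson conv_trans ty_lc)
qed simp_all

lemma ty_Lam_inv:
  "ty \<Gamma> (Lam C D) T \<Longrightarrow> \<exists>E S i. ty \<Gamma> C (Univ i) \<and> finite S \<and>
     (\<forall>x. x \<notin> S \<longrightarrow> ty (\<Gamma> @ [(x, C)]) (opn D (FVar x)) (opn E (FVar x))) \<and> conv (Pi C E) T"
proof (induction \<Gamma> "Lam C D" T rule: ty_induct)
  case (ty_lam \<Gamma> i S B)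
  then show ?case by (auto simp: conv_def)
next
  case (ty_conv \<Gamma> A0 B0 i)
  then show ?case by (meson conv_trans ty_lc)
qed simp_all

lemma ty_type: "ty \<Gamma> M A \<Longrightarrow> \<exists>i. ty \<Gamma> A (Univ i)"
proof (induction rule: ty_induct)
  case (ty_var \<Gamma> x A)
  then show ?case using wfc_entry_type by blast
next
  case (ty_univ \<Gamma> i)
  then show ?case using wfc_ty.ty_univ by blast
next
  case (ty_pi \<Gamma> A i S B j)
  then show ?case using wfc_ty.ty_univ ty_wfc by blast
next
  case (ty_app \<Gamma> M A B N)
  obtain k where "ty \<Gamma> (Pi A B) (Univ k)" using ty_app.IH(1) by blast
  then obtain j S where S: "finite S" "\<forall>x. x \<notin> S \<longrightarrow> ty (\<Gamma> @ [(x, A)]) (opn B (FVar x)) (Univ j)"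
    by (meson ty_Pi_inv)
  obtain x where x: "x \<notin> S \<union> fv B"
    using obtain_fresh[of "S \<union> fv B"] S(1) by auto
  have "ty \<Gamma> (opn B N) (opn (Univ j) N)"
    by (rule ty_opn[of \<Gamma> x A]) (use x S(2) ty_app.hyps(2) in auto)
  then show ?case by auto
next
  case (ty_lam \<Gamma> A i S M B)
  obtain x where x: "x \<notin> S \<union> fv B"
    using obtain_fresh[of "S \<union> fv B"] ty_lam.hyps(2) by auto
  then obtain j where j: "ty (\<Gamma> @ [(x, A)]) (opn B (FVar x)) (Univ j)"
    using ty_lam.IH(2) by blast
  then have "ty \<Gamma> (Pi A B) (Univ (max i j))"
    using ty_Pi_fresh[OF ty_lam.hyps(1)] x by blast
  then show ?case by blast
qed blast+

lemma ty_beta: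
  assumes Lam: "ty \<Gamma> (Lam C D) (Pi A B)" and N: "ty \<Gamma> N A"
  shows "ty \<Gamma> (opn D N) (opn B N)"
proof -
  obtain E S i where C: "ty \<Gamma> C (Univ i)" and S: "finite S"
      and D: "\<forall>x. x \<notin> S \<longrightarrow> ty (\<Gamma> @ [(x, C)]) (opn D (FVar x)) (opn E (FVar x))"
      and PiC: "conv (Pi C E) (Pi A B)"
    using ty_Lam_inv[OF Lam] by blast
  from PiC obtain S' where CA: "conv C A" and S': "finite S'"
      and EB: "\<And>x. x \<notin> S' \<Longrightarrow> conv (opn E (FVar x)) (opn B (FVar x))"
    by (auto elim: conv_Pi_inj)
  have NC: "ty \<Gamma> N C" using N C conv_sym[OF CA] by (rule ty_conv)
  obtain x where x: "x \<notin> S \<union> fv D \<union> fv E"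
    using obtain_fresh[of "S \<union> fv D \<union> fv E"] S by auto
  have "ty \<Gamma> (opn D N) (opn E N)" by (rule ty_opn[of \<Gamma> x C]) (use x D NC in auto)
  moreover obtain k where "ty \<Gamma> (opn B N) (Univ k)"
    using ty_type[OF wfc_ty.ty_app[OF Lam N]] by blast
  moreover have "conv (opn E N) (opn B N)"
  proof (rule cofinite_opn[where R=conv, OF S'])
    show "conv (subst y N s) (subst y N t)" if "conv s t" for y s t
      using that conv_subst ty_lc[OF N] by blast
  qed (use EB in blast)
  ultimately show ?thesis by (rule ty_conv)
qed

lemma ty_Pi_dom_conv:
  assumes A': "ty \<Gamma> A' (Univ i)" and "conv A' A" and S: "finite S"
    and B: "\<And>x. x \<notin> S \<Longrightarrow> ty (\<Gamma> @ [(x, A)]) (opn B (FVar x)) (Univ j)"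
  shows "ty \<Gamma> (Pi A' B) (Univ (max i j))"
  using assms by (blast intro: ty_pi ty_ctx_conv)

lemma ty_Lam_dom_conv:
  assumes A': "ty \<Gamma> A' (Univ i)" and "conv A' A" and S: "finite S"
    and M: "\<And>x. x \<notin> S \<Longrightarrow> ty (\<Gamma> @ [(x, A)]) (opn M (FVar x)) (opn B (FVar x))"
  shows "ty \<Gamma> (Lam A' M) (Pi A' B)"
  using assms by (blast intro: ty_lam ty_ctx_conv)

lemma ty_App_arg_red:
  assumes M: "ty \<Gamma> M (Pi A B)" and N: "ty \<Gamma> N A" and N': "ty \<Gamma> N' A" and "red N N'"
  shows "ty \<Gamma> (App M N') (opn B N)"
proof -
  obtain k where "ty \<Gamma> (opn B N) (Univ k)"
    using ty_type[OF ty_app[OF M N]] by blast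
  moreover have "conv (opn B N') (opn B N)"
    using \<open>red N N'\<close> ty_lc[OF M] ty_lc[OF N] by (auto intro: reds_conv_sym reds_opn_arg)
  ultimately show ?thesis
    using ty_app[OF M N'] by (blast intro: ty_conv)
qed

lemma ty_red: "ty \<Gamma> M A \<Longrightarrow> red M M' \<Longrightarrow> ty \<Gamma> M' A"
proof (induction arbitrary: M' rule: ty_induct)
  case (ty_pi \<Gamma> A i S B j)
  from ty_pi.prems show ?case
  proof (rule red_PiE)
    fix A' assume "M' = Pi A' B" "red A A'"
    with ty_pi show ?thesis by (auto intro: ty_Pi_dom_conv reds_conv_sym)
  next
    fix S' B' assume "M' = Pi A B'" "finite S'" "\<And>x. x \<notin> S' \<Longrightarrow> red (opn B (FVar x)) (opn B' (FVar x))"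
    with ty_pi show ?thesis by (auto intro!: wfc_ty.ty_pi[of _ _ i "S \<union> S'"] ty_pi.IH(2))
  qed
next
  case (ty_app \<Gamma> M A B N)
  from ty_app.prems show ?case
  proof (rule red_AppE)
    fix C D assume "M = Lam C D" "M' = opn D N"
    with ty_app.hyps show ?thesis by (blast intro: ty_beta)
  next
    fix M'' assume "M' = App M'' N" "red M M''"
    with ty_app show ?thesis by (blast intro: wfc_ty.ty_app)
  next
    fix N' assume "M' = App M N'" "red N N'"
    with ty_app show ?thesis by (blast intro: ty_App_arg_red)
  qed
next
  case (ty_lam \<Gamma> A i S M B)
  from ty_lam.prems show ?case
  proof (rule red_LamE)
    fix A' assume M': "M' = Lam A' M" and "red A A'"
    with ty_lam have "ty \<Gamma> (Lam A' M) (Pi A' B)" by (auto intro: ty_Lam_dom_conv reds_conv_sym)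
    moreover obtain k where "ty \<Gamma> (Pi A B) (Univ k)"
      using ty_type[OF wfc_ty.ty_lam[OF ty_lam.hyps]] by blast
    moreover have "conv (Pi A' B) (Pi A B)"
      using \<open>red A A'\<close> by (auto intro: reds_conv_sym reds_Pi_dom)
    ultimately show ?thesis unfolding M' by (rule wfc_ty.ty_conv)
  next
    fix S' M2 assume "M' = Lam A M2" "finite S'" "\<And>x. x \<notin> S' \<Longrightarrow> red (opn M (FVar x)) (opn M2 (FVar x))"
    with ty_lam show ?thesis by (auto intro!: wfc_ty.ty_lam[of _ _ i "S \<union> S'"] ty_lam.IH(2))
  qed
qed (auto intro: wfc_ty.ty_conv)

lemma ty_reds: "reds M M' \<Longrightarrow> ty \<Gamma> M A \<Longrightarrow> ty \<Gamma> M' A"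
  by (induction rule: rtranclp_induct) (auto intro: ty_red)

lemma type_not_reds_Lam: "ty \<Gamma> T (Univ i) \<Longrightarrow> \<not> reds T (Lam C D)"
proof
  assume "ty \<Gamma> T (Univ i)" "reds T (Lam C D)"
  then have "ty \<Gamma> (Lam C D) (Univ i)" using ty_reds by blast
  then obtain E where "conv (Pi C E) (Univ i)" using ty_Lam_inv by blast
  then show False using conv_Pi_Univ by blast
qed

text \<open>On types, the eta clauses of \<open>equiv\<close> never apply, as no type reduces to a \<open>\<lambda>\<close>.\<close>

lemma typing_imp_ty:
  shows "wf_ctx \<Gamma> \<Longrightarrow> wfc \<Gamma>"
    and "typing \<Gamma> M A \<Longrightarrow> ty \<Gamma> M A"
proof (induction rule: wf_ctx_typing.inducts)
  case (t_lam S \<Gamma> A M B)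
  obtain x where "x \<notin> S" using obtain_fresh t_lam.hyps(1) .
  then obtain i where "ty \<Gamma> A (Univ i)"
    using t_lam.IH ty_wfc wfc_snocE by metis
  then show ?case using t_lam.hyps(1) t_lam.IH by (rule wfc_ty.ty_lam)
next
  case (t_conv \<Gamma> M A B i)
  obtain k where A: "ty \<Gamma> A (Univ k)" using ty_type t_conv.IH(1) by blast
  from t_conv.hyps(3) have "conv A B"
  proof (cases rule: equiv.cases)
    case eta1
    then show ?thesis using A type_not_reds_Lam by blast
  next
    case eta2
    then show ?thesis using t_conv.IH(2) type_not_reds_Lam by blast
  qed (auto simp: conv_def)
  then show ?case using t_conv.IH by (blast intro: wfc_ty.ty_conv)
qed (auto intro: wfc_ty.intros)

lemma ty_imp_typing:
  shows "wfc \<Gamma> \<Longrightarrow> wf_ctx \<Gamma>"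
    and "ty \<Gamma> M A \<Longrightarrow> typing \<Gamma> M A"
proof (induction rule: wfc_ty.inducts)
  case (ty_conv \<Gamma> M A B i)
  then show ?case by (auto intro: t_conv equiv.join simp: conv_def)
qed (auto intro: wf_ctx_typing.intros)

lemma typing_iff_ty: "typing \<Gamma> M A \<longleftrightarrow> ty \<Gamma> M A"
  using typing_imp_ty(2) ty_imp_typing(2) by blast

section \<open>Strengthening\<close>

lemma ty_App_reducts:
  assumes M: "ty \<Delta> M T1" and T1: "reds (Pi A B) T1" and N: "ty \<Delta> N T2" and T2: "reds A T2"
    and lc: "lc A" "lc N"
  shows "\<exists>T. reds (opn B N) T \<and> ty \<Delta> (App M N) T"
proof -
  obtain A1 B1 S1 where T1_eq: "T1 = Pi A1 B1" and A1: "reds A A1" and "finite S1"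
      and B1: "\<forall>x. x \<notin> S1 \<longrightarrow> reds (opn B (FVar x)) (opn B1 (FVar x))"
    using reds_Pi_inv[OF T1] by blast
  obtain A3 where A3: "reds A1 A3" "reds T2 A3" using church_rosser[OF A1 T2 lc(1)] .
  have Pi3: "reds (Pi A1 B1) (Pi A3 B1)" using A3(1) by (rule reds_Pi_dom)
  obtain k where "ty \<Delta> (Pi A1 B1) (Univ k)" using ty_type M T1_eq by blast
  then have k: "ty \<Delta> (Pi A3 B1) (Univ k)" using ty_reds Pi3 by blast
  then have M3: "ty \<Delta> M (Pi A3 B1)" using ty_conv M T1_eq reds_conv[OF Pi3] by blast
  obtain i where "ty \<Delta> A3 (Univ i)" using ty_Pi_inv[OF k] by meson
  then have "ty \<Delta> N A3" using ty_conv[OF N] reds_conv[OF A3(2)] by blast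
  with M3 have "ty \<Delta> (App M N) (opn B1 N)" by (rule ty_app)
  moreover have "reds (opn B N) (opn B1 N)" using \<open>finite S1\<close> B1 lc(2) by (rule reds_opn_body)
  ultimately show ?thesis by blast
qed

lemma ty_conv_reduct:
  assumes M: "ty \<Delta> M A1" and A1: "reds A A1" and "conv A B" "lc A"
  shows "\<exists>D. reds B D \<and> ty \<Delta> M D"
proof -
  obtain C where C: "reds A C" "reds B C" using \<open>conv A B\<close> by (auto simp: conv_def)
  obtain D where D: "reds A1 D" "reds C D" using church_rosser[OF A1 C(1) \<open>lc A\<close>] .
  obtain k where "ty \<Delta> A1 (Univ k)" using ty_type[OF M] by blast
  then have "ty \<Delta> D (Univ k)" using ty_reds D(1) by blast
  then have "ty \<Delta> M D" using ty_conv[OF M] reds_conv[OF D(1)] by blast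
  moreover have "reds B D" using C(2) D(2) by (rule rtranclp_trans)
  ultimately show ?thesis by blast
qed

lemma ty_Lam_reduct:
  assumes A: "ty \<Delta> A (Univ i)" and B0: "reds (opn B (FVar x)) B0"
    and M: "ty (\<Delta> @ [(x, A)]) (opn M (FVar x)) B0"
    and x: "x \<notin> fv M" "x \<notin> fv B" and lcB: "lc_at (Suc 0) B"
  shows "\<exists>B'. reds (Pi A B) B' \<and> ty \<Delta> (Lam A M) B'"
proof -
  have "lc B0" using ty_lc[OF M] by simp
  then have "ty (\<Delta> @ [(x, A)]) (opn M (FVar x)) (opn (cls x B0) (FVar x))"
    using M by (simp add: opn_cls)
  then have "ty \<Delta> (Lam A M) (Pi A (cls x B0))"
    using ty_Lam_fresh[OF A] x fv_cls by blast
  moreover have "reds (Pi A B) (Pi A (cls x B0))"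
    using B0 x lcB by (intro reds_binder_fresh[where f="Pi A"] red.pi2) auto
  ultimately show ?thesis by blast
qed

text \<open>Only a reduct of the type survives: a conversion step may pass through a type whose
  free variables are not declared in the smaller context.\<close>

lemma ty_strengthen:
  "ty \<Gamma> M A \<Longrightarrow> wfc \<Delta> \<Longrightarrow> set \<Delta> \<subseteq> set \<Gamma> \<Longrightarrow> fv M \<subseteq> cdom \<Delta>
   \<Longrightarrow> \<exists>A'. reds A A' \<and> ty \<Delta> M A'"
proof (induction arbitrary: \<Delta> rule: ty_induct)
  case (ty_var \<Gamma> x A)
  then obtain B where B: "(x, B) \<in> set \<Delta>" by (auto simp: cdom_def)
  with ty_var have "B = A" by (meson subsetD wfc_entry_unique)
  with B ty_var.prems show ?case by (blast intro: wfc_ty.ty_var)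
next
  case (ty_univ \<Gamma> i)
  then show ?case by (blast intro: wfc_ty.ty_univ)
next
  case (ty_pi \<Gamma> A i S B j)
  have A: "ty \<Delta> A (Univ i)" using ty_pi.IH(1) ty_pi.prems reds_Univ by fastforce
  obtain x where x: "x \<notin> S \<union> cdom \<Gamma> \<union> fv B"
    using obtain_fresh[of "S \<union> cdom \<Gamma> \<union> fv B"] ty_pi.hyps(2) by auto
  have "cdom \<Delta> \<subseteq> cdom \<Gamma>" using ty_pi.prems(2) by (auto simp: cdom_def)
  then have "wfc (\<Delta> @ [(x, A)])" using wfc_snoc[OF ty_pi.prems(1) A] x by auto
  moreover have "fv (opn B (FVar x)) \<subseteq> cdom (\<Delta> @ [(x, A)])"
    using fv_opn_subset[of B "FVar x"] ty_pi.prems(3) by auto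
  ultimately have "ty (\<Delta> @ [(x, A)]) (opn B (FVar x)) (Univ j)"
    using ty_pi.IH(2)[of x "\<Delta> @ [(x, A)]"] x ty_pi.prems(2) reds_Univ by fastforce
  then show ?case using ty_Pi_fresh[OF A] x by blast
next
  case (ty_app \<Gamma> M A B N)
  obtain T1 T2 where "reds (Pi A B) T1" "ty \<Delta> M T1" "reds A T2" "ty \<Delta> N T2"
    using ty_app.IH[OF ty_app.prems(1,2)] ty_app.prems(3) by (metis Un_subset_iff fv.simps(5))
  moreover have "lc A" "lc N" using ty_lc[OF ty_app.hyps(1)] ty_lc[OF ty_app.hyps(2)] by simp_all
  ultimately show ?case by (blast intro: ty_App_reducts)
next
  case (ty_lam \<Gamma> A i S M B)
  have A: "ty \<Delta> A (Univ i)" using ty_lam.IH(1) ty_lam.prems reds_Univ by fastforce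
  obtain x where x: "x \<notin> S \<union> cdom \<Gamma> \<union> fv B \<union> fv M"
    using obtain_fresh[of "S \<union> cdom \<Gamma> \<union> fv B \<union> fv M"] ty_lam.hyps(2) by auto
  have "cdom \<Delta> \<subseteq> cdom \<Gamma>" using ty_lam.prems(2) by (auto simp: cdom_def)
  then have "wfc (\<Delta> @ [(x, A)])" using wfc_snoc[OF ty_lam.prems(1) A] x by auto
  moreover have "fv (opn M (FVar x)) \<subseteq> cdom (\<Delta> @ [(x, A)])"
    using fv_opn_subset[of M "FVar x"] ty_lam.prems(3) by auto
  ultimately obtain B0 where "reds (opn B (FVar x)) B0" "ty (\<Delta> @ [(x, A)]) (opn M (FVar x)) B0"
    using ty_lam.IH(2)[of x "\<Delta> @ [(x, A)]"] x ty_lam.prems(2) by fastforce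
  moreover have "lc_at (Suc 0) B"
    using ty_lc[OF ty_lam.hyps(3)] x lc_opn_body by blast
  ultimately show ?case using ty_Lam_reduct[OF A] x by blast
next
  case (ty_conv \<Gamma> M A B i)
  then show ?case using ty_conv_reduct ty_lc by blast
qed auto

lemma ty_strengthen_exact:
  assumes M: "ty \<Gamma> M A" and \<Delta>: "wfc \<Delta>" "set \<Delta> \<subseteq> set \<Gamma>" and fv: "fv M \<union> fv A \<subseteq> cdom \<Delta>"
  shows "ty \<Delta> M A"
proof -
  obtain A' where A': "reds A A'" "ty \<Delta> M A'" using ty_strengthen[OF M \<Delta>] fv by blast
  obtain i where "ty \<Gamma> A (Univ i)" using ty_type[OF M] by blast
  then obtain U where "reds (Univ i) U" "ty \<Delta> A U" using ty_strengthen[OF _ \<Delta>] fv by blast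
  then have "ty \<Delta> A (Univ i)" using reds_Univ by blast
  with A' show ?thesis by (blast intro: ty_conv reds_conv_sym)
qed

section \<open>Free-variable contexts\<close>

definition scoped :: "ctx \<Rightarrow> bool" where
  "scoped \<Delta> \<longleftrightarrow> (\<forall>k < length \<Delta>. fv (snd (\<Delta> ! k)) \<subseteq> cdom (take k \<Delta>))"

lemma scoped_Nil [simp]: "scoped []"
  by (simp add: scoped_def)

lemma scoped_snoc: "scoped (\<Delta> @ [e]) \<longleftrightarrow> scoped \<Delta> \<and> fv (snd e) \<subseteq> cdom \<Delta>"
  unfolding scoped_def by (auto simp: nth_append less_Suc_eq)

lemma scoped_take: "scoped \<Gamma> \<Longrightarrow> scoped (take i \<Gamma>)"
  unfolding scoped_def by (auto simp: min_def)

lemma wfc_scoped: "wfc \<Gamma> \<Longrightarrow> scoped \<Gamma>"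
proof (induction \<Gamma> rule: rev_induct)
  case (snoc p \<Gamma>)
  obtain y B where p: "p = (y, B)" by (cases p)
  with snoc.prems obtain i where "wfc \<Gamma>" "ty \<Gamma> B (Univ i)" by (auto elim: wfc_snocE)
  with snoc.IH p show ?case using ty_fv by (auto simp: scoped_snoc)
qed simp

lemma wfc_sublist:
  "wfc \<Gamma> \<Longrightarrow> set \<Delta> \<subseteq> set \<Gamma> \<Longrightarrow> distinct (map fst \<Delta>) \<Longrightarrow> scoped \<Delta> \<Longrightarrow> wfc \<Delta>"
proof (induction \<Delta> rule: rev_induct)
  case (snoc p \<Delta>)
  obtain y T where p: "p = (y, T)" by (cases p)
  have \<Delta>: "wfc \<Delta>" using snoc by (auto simp: scoped_snoc)
  have "(y, T) \<in> set \<Gamma>" using snoc.prems p by auto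
  then obtain i where "ty \<Gamma> T (Univ i)" using wfc_entry_type snoc.prems(1) by blast
  then have "ty \<Delta> T (Univ i)"
    using ty_strengthen_exact[OF _ \<Delta>] snoc.prems p by (auto simp: scoped_snoc)
  moreover have "y \<notin> cdom \<Delta>" using snoc.prems(3) p by (auto simp: cdom_def)
  ultimately show ?case using wfc_snoc[OF \<Delta>] p by auto
qed (simp add: wfc_nil)

lemma set_cunion [simp]: "set (cunion \<Gamma> \<Delta>) = set \<Gamma> \<union> set \<Delta>"
  by (auto simp: cunion_def)

lemma cdom_cunion [simp]: "cdom (cunion \<Gamma> \<Delta>) = cdom \<Gamma> \<union> cdom \<Delta>"
  by (auto simp: cdom_def)

lemma distinct_cunion: "distinct \<Gamma> \<Longrightarrow> distinct \<Delta> \<Longrightarrow> distinct (cunion \<Gamma> \<Delta>)"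
  by (auto simp: cunion_def)

lemma cunion_snoc: "cunion \<Gamma> (\<Delta> @ [e]) = (if e \<in> set \<Gamma> then cunion \<Gamma> \<Delta> else cunion \<Gamma> \<Delta> @ [e])"
  by (simp add: cunion_def)

lemma scoped_cunion:
  "scoped \<Gamma> \<Longrightarrow> (\<forall>k < length \<Delta>. fv (snd (\<Delta> ! k)) \<subseteq> cdom \<Gamma> \<union> cdom (take k \<Delta>))
   \<Longrightarrow> scoped (cunion \<Gamma> \<Delta>)"
proof (induction \<Delta> rule: rev_induct)
  case (snoc e \<Delta>)
  have "fv (snd (\<Delta> ! k)) \<subseteq> cdom \<Gamma> \<union> cdom (take k \<Delta>)" if "k < length \<Delta>" for k
    using snoc.prems(2)[rule_format, of k] that by (simp add: nth_append)
  then have "scoped (cunion \<Gamma> \<Delta>)" using snoc by blast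
  moreover have "fv (snd e) \<subseteq> cdom \<Gamma> \<union> cdom \<Delta>" using snoc.prems(2)[rule_format, of "length \<Delta>"] by simp
  ultimately show ?case by (simp add: cunion_snoc scoped_snoc)
qed (simp add: cunion_def)

lemma set_foldl_cunion: "set (foldl cunion \<Gamma> Ls) = set \<Gamma> \<union> (\<Union>\<Delta> \<in> set Ls. set \<Delta>)"
  by (induction Ls arbitrary: \<Gamma>) auto

lemma distinct_foldl_cunion: "distinct \<Gamma> \<Longrightarrow> \<forall>\<Delta> \<in> set Ls. distinct \<Delta> \<Longrightarrow> distinct (foldl cunion \<Gamma> Ls)"
  by (induction Ls arbitrary: \<Gamma>) (auto intro: distinct_cunion)

lemma scoped_foldl_cunion: "scoped \<Gamma> \<Longrightarrow> \<forall>\<Delta> \<in> set Ls. scoped \<Delta> \<Longrightarrow> scoped (foldl cunion \<Gamma> Ls)"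
proof (induction Ls arbitrary: \<Gamma>)
  case (Cons \<Delta> Ls)
  then have "scoped (cunion \<Gamma> \<Delta>)" by (intro scoped_cunion) (auto simp: scoped_def)
  with Cons show ?case by simp
qed simp

lemma set_fvc_aux: "set (fvc_aux n \<Gamma> S) \<subseteq> set \<Gamma>"
proof (induction n arbitrary: \<Gamma> S)
  case (Suc n)
  then show ?case by (fastforce simp: Let_def set_foldl_cunion dest: in_set_takeD)
qed simp

lemma distinct_fvc_aux: "distinct \<Gamma> \<Longrightarrow> distinct (fvc_aux n \<Gamma> S)"
proof (induction n arbitrary: \<Gamma> S)
  case (Suc n)
  let ?idx = "filter (\<lambda>i. fst (\<Gamma> ! i) \<in> S) [0..<length \<Gamma>]"
  have "inj_on ((!) \<Gamma>) (set ?idx)" using Suc.prems by (auto simp: inj_on_def nth_eq_iff_index_eq)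
  then have "distinct (map ((!) \<Gamma>) ?idx)" by (simp add: distinct_map)
  moreover have "distinct (foldl cunion [] (map (\<lambda>i. fvc_aux n (take i \<Gamma>) (fv (snd (\<Gamma> ! i)))) ?idx))"
    using Suc by (intro distinct_foldl_cunion) auto
  ultimately show ?case by (simp add: Let_def distinct_cunion)
qed simp

lemma cdom_fvc_aux: "length \<Gamma> \<le> n \<Longrightarrow> S \<inter> cdom \<Gamma> \<subseteq> cdom (fvc_aux n \<Gamma> S)"
proof (cases n)
  case (Suc m)
  have "S \<inter> cdom \<Gamma> \<subseteq> fst ` set (map ((!) \<Gamma>) (filter (\<lambda>i. fst (\<Gamma> ! i) \<in> S) [0..<length \<Gamma>]))"
    by (force simp: cdom_def in_set_conv_nth)
  then show ?thesis using Suc by (auto simp: Let_def cdom_def)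
qed (simp add: cdom_def)

lemma scoped_fvc_aux: "scoped \<Gamma> \<Longrightarrow> length \<Gamma> \<le> n \<Longrightarrow> scoped (fvc_aux n \<Gamma> S)"
proof (induction n arbitrary: \<Gamma> S)
  case (Suc n)
  let ?idx = "filter (\<lambda>i. fst (\<Gamma> ! i) \<in> S) [0..<length \<Gamma>]"
  let ?L = "\<lambda>i. fvc_aux n (take i \<Gamma>) (fv (snd (\<Gamma> ! i)))"
  let ?F = "foldl cunion [] (map ?L ?idx)"
  have F: "scoped ?F"
    using Suc by (intro scoped_foldl_cunion) (auto simp: scoped_take)
  have Fi: "fv (snd (\<Gamma> ! i)) \<subseteq> cdom ?F" if "i \<in> set ?idx" for i
  proof -
    have "fv (snd (\<Gamma> ! i)) \<subseteq> cdom (take i \<Gamma>)" using Suc.prems(1) that by (auto simp: scoped_def)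
    moreover have "fv (snd (\<Gamma> ! i)) \<inter> cdom (take i \<Gamma>) \<subseteq> cdom (?L i)"
      using Suc.prems(2) that by (intro cdom_fvc_aux) auto
    moreover have "set (?L i) \<subseteq> set ?F" using that by (auto simp: set_foldl_cunion)
    then have "cdom (?L i) \<subseteq> cdom ?F" unfolding cdom_def by (rule image_mono)
    ultimately show ?thesis by blast
  qed
  have "fv (snd (map ((!) \<Gamma>) ?idx ! k)) \<subseteq> cdom ?F \<union> cdom (take k (map ((!) \<Gamma>) ?idx))"
    if "k < length (map ((!) \<Gamma>) ?idx)" for k
  proof -
    have "?idx ! k \<in> set ?idx" by (rule nth_mem) (use that in simp)
    with that show ?thesis using Fi[of "?idx ! k"] by auto
  qed
  with F show ?case
    by (simp add: Let_def scoped_cunion)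
qed simp

lemma fvc_sublist: "set (fvc \<Gamma> S) \<subseteq> set \<Gamma>"
  by (simp add: fvc_def set_fvc_aux)

lemma cdom_fvc: "S \<inter> cdom \<Gamma> \<subseteq> cdom (fvc \<Gamma> S)"
  by (simp add: fvc_def cdom_fvc_aux)

lemma wfc_fvc: "wfc \<Gamma> \<Longrightarrow> wfc (fvc \<Gamma> S)"
proof -
  assume \<Gamma>: "wfc \<Gamma>"
  have "distinct (map fst \<Gamma>)" using \<Gamma> by (rule wfc_distinct)
  then have "inj_on fst (set \<Gamma>)" and "distinct \<Gamma>" by (simp_all add: distinct_map)
  then have "distinct (map fst (fvc \<Gamma> S))"
    using fvc_sublist distinct_fvc_aux by (metis distinct_map fvc_def inj_on_subset)
  moreover have "scoped (fvc \<Gamma> S)"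
    using wfc_scoped[OF \<Gamma>] by (simp add: fvc_def scoped_fvc_aux)
  ultimately show ?thesis using wfc_sublist[OF \<Gamma> fvc_sublist] by blast
qed

theorem lemma3p5:
  assumes "typing \<Gamma> M A"
  shows "typing (FV \<Gamma> M A) M A"
proof -
  have M: "ty \<Gamma> M A" using assms by (simp add: typing_iff_ty)
  have \<Gamma>: "wfc \<Gamma>" using M by (rule ty_wfc)
  have "fv M \<union> fv A \<subseteq> cdom (FV \<Gamma> M A)"
    using ty_fv[OF M] cdom_fvc[of "fv M \<union> fv A" \<Gamma>] by (auto simp: FV_def)
  then have "ty (FV \<Gamma> M A) M A"
    using ty_strengthen_exact[OF M wfc_fvc[OF \<Gamma>]] fvc_sublist by (simp add: FV_def)
  then show ?thesis by (simp add: typing_iff_ty)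
qed

end
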